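(* Let $n,k,m\ge1$, let $D\subseteq\mathbb{R}^n$ and $\Omega\subseteq\mathbb{R}^k$ be open, $O=D\times\Omega$, let $U\subseteq\mathbb{R}^m$ be nonempty and closed. Let $A:\Omega\times U\to\mathbb{R}^{n\times n}$, $b:\Omega\times U\to\mathbb{R}^n$, $c_{i,j}:\Omega\to\mathbb{R}$ ($i\le k$, $j\le n$), $f=(f_1,\dots,f_k)':\Omega\times U\to\mathbb{R}^k$ be locally Lipschitz, and consider the system $$(\Sigma)\qquad \dot x=A(y,u)x+b(y,u),\qquad \dot y_i=f_i(y,u)+\sum_{j=1}^n c_{i,j}(y)x_j,\ i=1,\dots,k,\qquad (x,y)\in O,\ u\in U.$$ Assume that for every $(x_0,y_0)\in O$ and every $u\in L^\infty_{loc}(\mathbb{R}_+;U)$ there is a unique solution of $(\Sigma)$ on $[0,+\infty)$ with values in $O$ and initial value $(x_0,y_0)$. Let $r>0$ and assume: (i) $(\Sigma)$ is strongly observable in time $r$; (ii) for every $\xi\in D$ and every $(y,u)\in C^0([0,r];\Omega)\times L^\infty([0,r];U)$, the solution of $\dot z(t)=A(y(t),u(t))z(t)+b(y(t),u(t))$, $z(0)=\xi$, satisfies $z(t)\in D$ for all $t\in[0,r]$. Let $(x_0,y_0,z_0)\in D\times\Omega\times D$ and $u\in L^\infty_{loc}(\mathbb{R}_+;U)$, let $(x(t),y(t))$ be the solution of $(\Sigma)$ with initial value $(x_0,y_0)$, and let $z(t)\in D$, $t\ge0$, be the solution of the reduced-order hybrid observer described in the context with $z(0)=z_0$. Then $z(t)=x(t)$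 for all $t\ge r$.
   Context: Solutions on $[0,r]$ for $u\in L^\infty([0,r];U)$ are obtained from any extension of $u$. An input $u\in L^\infty([0,r];U)$ strongly distinguishes $(x_0,y_0)\in O$ in time $r$ if for every $(\xi,\eta)\in O$, $(\xi,\eta)\neq(x_0,y_0)$, $\max_{t\in[0,r]}|y(t,x_0,y_0;u)-y(t,\xi,\eta;u)|>0$; $(\Sigma)$ is strongly observable in time $r$ if every $u\in L^\infty([0,r];U)$ strongly distinguishes every state of $O$. Operator $P$: for $y\in C^0([0,r];\Omega)$, $u\in L^\infty([0,r];U)$, let $\Phi(t)$ solve $\dot\Phi=A(y(t),u(t))\Phi$, $\Phi(0)=I$; $\theta(\tau)=\int_0^\tau\Phi(\tau)\Phi^{-1}(s)b(y(s),u(s))ds$; $C'(\tau)=\{c_{i,j}(y(\tau))\}\in\mathbb{R}^{k\times n}$; $q(\tau)=\int_0^\tau\Phi'(s)C(s)ds$; $p(\tau)=y(\tau)-y(0)-\int_0^\tau f(y(s),u(s))ds-\int_0^\tau C'(s)\theta(s)ds$; $Q=\int_0^r q q'd\tau$; when $Q$ is invertible, $P(y,u)=\Phi(r)Q^{-1}\int_0^r q(\tau)p(\tau)d\tau+\theta(r)$. Shift: $(\delta_s y)(\sigma)=y(s+\sigma)$, $(\delta_s u)(\sigma)=u(s+\sigma)$, $\sigma\in[0,r]$. Reduced-order observer: with $\tau_i=ir$, on $[\tau_i,\tau_{i+1})$, $\dot z(t)=A(y(t),u(t))z(t)+b(y(t),u(t))$, and $z(\tau_{i+1})=P(\delta_{\tau_i}y,\delta_{\tau_i}u)$;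 prime denotes transpose. *)

theory Defs
  imports "HOL-Analysis.Analysis"
begin

text \<open>A y v :: real^'n^'n, b y v :: real^'n, C y :: real^'n^'k with (C y)$i$j = c_{i,j}(y),
  f y v :: real^'k.  Inputs are represented by (Lebesgue measurable) representatives
  taking values in U everywhere and bounded on bounded intervals.\<close>

definition loc_lipschitz :: "'a::metric_space set \<Rightarrow> ('a \<Rightarrow> 'b::metric_space) \<Rightarrow> bool" where
  "loc_lipschitz S g \<longleftrightarrow> (\<forall>p\<in>S. \<exists>e>0. \<exists>L. L-lipschitz_on (cball p e \<inter> S) g)"

definition Linf_loc :: "('m::euclidean_space) set \<Rightarrow> (real \<Rightarrow> 'm) \<Rightarrow> bool" where
  "Linf_loc U u \<longleftrightarrow> set_borel_measurable lebesgue {0..} u \<and> (\<forall>t\<ge>0. u t \<in> U)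
      \<and> (\<forall>T. bounded (u ` {0..T}))"

definition Linf :: "real \<Rightarrow> ('m::euclidean_space) set \<Rightarrow> (real \<Rightarrow> 'm) \<Rightarrow> bool" where
  "Linf r U u \<longleftrightarrow> set_borel_measurable lebesgue {0..r} u \<and> (\<forall>t\<in>{0..r}. u t \<in> U)
      \<and> bounded (u ` {0..r})"

definition sys_field ::
  "(real^'k \<Rightarrow> real^'m \<Rightarrow> real^'n^'n) \<Rightarrow> (real^'k \<Rightarrow> real^'m \<Rightarrow> real^'n)
   \<Rightarrow> (real^'k \<Rightarrow> real^'n^'k) \<Rightarrow> (real^'k \<Rightarrow> real^'m \<Rightarrow> real^'k)
   \<Rightarrow> (real^'n) \<times> (real^'k) \<Rightarrow> real^'m \<Rightarrow> (real^'n) \<times> (real^'k)" where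
  "sys_field A b C f w v = (A (snd w) v *v fst w + b (snd w) v, f (snd w) v + C (snd w) *v fst w)"

definition sys_sol ::
  "(real^'k \<Rightarrow> real^'m \<Rightarrow> real^'n^'n) \<Rightarrow> (real^'k \<Rightarrow> real^'m \<Rightarrow> real^'n)
   \<Rightarrow> (real^'k \<Rightarrow> real^'n^'k) \<Rightarrow> (real^'k \<Rightarrow> real^'m \<Rightarrow> real^'k)
   \<Rightarrow> ((real^'n) \<times> (real^'k)) set \<Rightarrow> (real^'n) \<times> (real^'k) \<Rightarrow> (real \<Rightarrow> real^'m)
   \<Rightarrow> (real \<Rightarrow> (real^'n) \<times> (real^'k)) \<Rightarrow> bool" where
  "sys_sol A b C f Ob p u w \<longleftrightarrow> w 0 = p \<and> continuous_on {0..} w \<and> (\<forall>t\<ge>0. w t \<in> Ob)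
     \<and> (\<forall>t\<ge>0. ((\<lambda>s. sys_field A b C f (w s) (u s)) has_integral (w t - p)) {0..t})"

text \<open>u strongly distinguishes p in time r (u in L^infinity([0,r];U); the solutions on [0,r]
  are those obtained from any extension of u in L^infinity_loc).\<close>
definition strongly_distinguishes where
  "strongly_distinguishes A b C f Ob U r u p \<longleftrightarrow>
     (\<forall>q\<in>Ob. q \<noteq> p \<longrightarrow>
       (\<forall>ub w1 w2. Linf_loc U ub \<and> (\<forall>t\<in>{0..r}. ub t = u t)
          \<and> sys_sol A b C f Ob p ub w1 \<and> sys_sol A b C f Ob q ub w2
          \<longrightarrow> (\<exists>t\<in>{0..r}. snd (w1 t) \<noteq> snd (w2 t))))"

definition strongly_observable where
  "strongly_observable A b C f Ob U r \<longleftrightarrow>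
     (\<forall>u. Linf r U u \<longrightarrow> (\<forall>p\<in>Ob. strongly_distinguishes A b C f Ob U r u p))"

definition lin_sol ::
  "(real^'k \<Rightarrow> real^'m \<Rightarrow> real^'n^'n) \<Rightarrow> (real^'k \<Rightarrow> real^'m \<Rightarrow> real^'n)
   \<Rightarrow> (real \<Rightarrow> real^'k) \<Rightarrow> (real \<Rightarrow> real^'m) \<Rightarrow> real \<Rightarrow> real \<Rightarrow> real^'n
   \<Rightarrow> (real \<Rightarrow> real^'n) \<Rightarrow> bool" where
  "lin_sol A b y u a T xi z \<longleftrightarrow> z a = xi \<and> continuous_on {a..T} z \<and>
     (\<forall>t\<in>{a..T}. ((\<lambda>s. A (y s) (u s) *v z s + b (y s) (u s)) has_integral (z t - xi)) {a..t})"

definition obs_Phi ::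
  "(real^'k \<Rightarrow> real^'m \<Rightarrow> real^'n^'n) \<Rightarrow> real \<Rightarrow> (real \<Rightarrow> real^'k) \<Rightarrow> (real \<Rightarrow> real^'m)
   \<Rightarrow> real \<Rightarrow> real^'n^'n" where
  "obs_Phi A r y u = (SOME \<Phi>. \<Phi> 0 = mat 1 \<and> continuous_on {0..r} \<Phi> \<and>
      (\<forall>t\<in>{0..r}. ((\<lambda>s. A (y s) (u s) ** \<Phi> s) has_integral (\<Phi> t - mat 1)) {0..t}))"

definition obs_theta where
  "obs_theta A b r y u \<tau> =
     integral {0..\<tau>} (\<lambda>s. (obs_Phi A r y u \<tau> ** matrix_inv (obs_Phi A r y u s)) *v b (y s) (u s))"

definition obs_q ::
  "(real^'k \<Rightarrow> real^'m \<Rightarrow> real^'n^'n) \<Rightarrow> (real^'k \<Rightarrow> real^'n^'k) \<Rightarrow> real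
   \<Rightarrow> (real \<Rightarrow> real^'k) \<Rightarrow> (real \<Rightarrow> real^'m) \<Rightarrow> real \<Rightarrow> real^'k^'n" where
  "obs_q A C r y u \<tau> = integral {0..\<tau>} (\<lambda>s. transpose (obs_Phi A r y u s) ** transpose (C (y s)))"

definition obs_p where
  "obs_p A b C f r y u \<tau> = y \<tau> - y 0 - integral {0..\<tau>} (\<lambda>s. f (y s) (u s))
      - integral {0..\<tau>} (\<lambda>s. C (y s) *v obs_theta A b r y u s)"

definition obs_Q where
  "obs_Q A C r y u = integral {0..r} (\<lambda>\<tau>. obs_q A C r y u \<tau> ** transpose (obs_q A C r y u \<tau>))"

definition obs_P where
  "obs_P A b C f r y u = obs_Phi A r y u r *v (matrix_inv (obs_Q A C r y u)
      *v integral {0..r} (\<lambda>\<tau>. obs_q A C r y u \<tau> *v obs_p A b C f r y u \<tau>))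
      + obs_theta A b r y u r"

definition observer_sol where
  "observer_sol A b C f r y u z0 z \<longleftrightarrow> z 0 = z0 \<and>
     (\<forall>i::nat.
        (\<forall>t. real i * r \<le> t \<and> t < real (Suc i) * r \<longrightarrow>
           ((\<lambda>s. A (y s) (u s) *v z s + b (y s) (u s)) has_integral (z t - z (real i * r)))
             {real i * r..t})
      \<and> z (real (Suc i) * r) =
          obs_P A b C f r (\<lambda>\<sigma>. y (real i * r + \<sigma>)) (\<lambda>\<sigma>. u (real i * r + \<sigma>)))"

end

theory Submission
  imports Defs
begin

text \<open>
  On a window $[\tau, \tau + r]$ the state is an affine function of its initial value:
  $x(t) = \Phi(t) x(\tau) + \theta(t)$ (variation of constants). Inserting this into the output
  equation gives $p(\cdot) = q(\cdot)^T x(\tau)$, hence $\int q\,p = Q\,x(\tau)$, so $P$ returns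
  $\Phi(r) x(\tau) + \theta(r) = x(\tau + r)$ as soon as the Gramian $Q = \int q q^T$ is invertible.
  If $Q v = 0$ with $v \neq 0$, then $q^T v = 0$, and $x + \varepsilon \Phi v$ is a second state
  trajectory with the same output; by hypothesis (ii) it stays in $D$, by well-posedness it extends
  to a solution, and this contradicts strong observability. So the observer is reset to the true
  state at every sampling instant $i r$, $i \ge 1$, and in between observer and state solve the same
  linear equation, so they agree by Gronwall's lemma.
\<close>

lemma has_integral_interval_diff:
  fixes f :: "real \<Rightarrow> 'a::banach"
  assumes "(f has_integral I) {a..d}" "(f has_integral J) {a..c}" "a \<le> c" "c \<le> d"
  shows "(f has_integral (I - J)) {c..d}"
proof -
  obtain K where K: "(f has_integral K) {c..d}"
    using integrable_subinterval_real[of f a d c d] assms by (auto simp: has_integral_integrable)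
  have "(f has_integral (J + K)) {a..d}"
    using has_integral_combine[OF assms(3,4) assms(2) K] .
  then have "I = J + K" using assms(1) has_integral_unique by blast
  then show ?thesis using K by simp
qed

lemma has_integral_shift_origin:
  fixes f :: "real \<Rightarrow> 'a::real_normed_vector"
  shows "((\<lambda>s. f (c + s)) has_integral I) {0..t} \<longleftrightarrow> (f has_integral I) {c..c + t}"
  using has_integral_shift_Icc_real[of f c I 0 t] by (simp add: o_def add.commute)

lemma has_integral_norm_le_length:
  fixes f :: "real \<Rightarrow> 'a::real_normed_vector"
  assumes "(f has_integral I) {c..d}" "c \<le> d" "\<And>s. s \<in> {c..d} \<Longrightarrow> norm (f s) \<le> B"
  shows "norm I \<le> B * (d - c)"
proof -
  have "B \<ge> 0"
    using assms(2) assms(3)[of c] by (meson atLeastAtMost_iff norm_ge_zero order.trans order_refl)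
  then have "norm I \<le> B * Henstock_Kurzweil_Integration.content {c..d}"
    by (rule has_integral_bound_real[OF _ finite.emptyI assms(1)]) (use assms(3) in auto)
  then show ?thesis using assms(2) by simp
qed

lemma has_integral_Pair:
  fixes f :: "real \<Rightarrow> 'a::real_normed_vector" and g :: "real \<Rightarrow> 'b::real_normed_vector"
  assumes "(f has_integral I) S" "(g has_integral J) S"
  shows "((\<lambda>s. (f s, g s)) has_integral (I, J)) S"
proof -
  have "bounded_linear (\<lambda>x::'a. (x, 0::'b))" "bounded_linear (\<lambda>y::'b. (0::'a, y))"
    by (intro bounded_linear_Pair bounded_linear_ident bounded_linear_zero)+
  from has_integral_add[OF has_integral_linear[OF assms(1) this(1)]
      has_integral_linear[OF assms(2) this(2)]]
  show ?thesis by (simp add: o_def)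
qed

lemma continuous_on_if_has_integral_increments:
  fixes z g :: "real \<Rightarrow> 'a::banach"
  assumes "\<And>t. t \<in> {a..b} \<Longrightarrow> (g has_integral (z t - z a)) {a..t}"
  shows "continuous_on {a..b} z"
proof (cases "a \<le> b")
  case True
  have "continuous_on {a..b} (\<lambda>t. z a + integral {a..t} g)"
    using assms[of b] True by (intro continuous_intros indefinite_integral_continuous_1) auto
  then show ?thesis
  proof (rule continuous_on_eq)
    fix t assume "t \<in> {a..b}"
    from integral_unique[OF assms[OF this]] show "z a + integral {a..t} g = z t" by simp
  qed
qed simp

lemma uniform_limit_has_integral_tendsto:
  fixes f :: "nat \<Rightarrow> real \<Rightarrow> 'a::real_normed_vector"
  assumes lim: "uniform_limit {a..b} f g sequentially" and "a \<le> b"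
    and f: "\<And>n. (f n has_integral I n) {a..b}" and g: "(g has_integral J) {a..b}"
  shows "I \<longlonglongrightarrow> J"
proof (rule LIMSEQ_I)
  fix e :: real assume "e > 0"
  define e' where "e' = e / (b - a + 1)"
  have "e' > 0" using \<open>e > 0\<close> \<open>a \<le> b\<close> by (simp add: e'_def)
  then obtain N where N: "\<And>n x. n \<ge> N \<Longrightarrow> x \<in> {a..b} \<Longrightarrow> dist (f n x) (g x) < e'"
    using uniform_limitD[OF lim] unfolding eventually_sequentially by blast
  have "norm (I n - J) < e" if "n \<ge> N" for n
  proof -
    have "norm (f n x - g x) \<le> e'" if "x \<in> {a..b}" for x
      using N[OF \<open>n \<ge> N\<close> that] by (simp add: dist_norm)
    then have "norm (I n - J) \<le> e' * (b - a)"
      by (rule has_integral_norm_le_length[OF has_integral_diff[OF f g] \<open>a \<le> b\<close>])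
    also have "\<dots> < e' * (b - a + 1)" using \<open>e' > 0\<close> by simp
    also have "\<dots> = e" using \<open>a \<le> b\<close> by (simp add: e'_def)
    finally show ?thesis .
  qed
  then show "\<exists>N. \<forall>n\<ge>N. norm (I n - J) < e" by blast
qed

lemma additive_quadratic_bounded_zero:
  fixes H :: "real \<Rightarrow> real \<Rightarrow> 'a::real_normed_vector"
  assumes add: "\<And>c d e. a \<le> c \<Longrightarrow> c \<le> d \<Longrightarrow> d \<le> e \<Longrightarrow> e \<le> b \<Longrightarrow> H c e = H c d + H d e"
    and bound: "\<And>c d. a \<le> c \<Longrightarrow> c \<le> d \<Longrightarrow> d \<le> b \<Longrightarrow> norm (H c d) \<le> C * (d - c)^2"
    and "a \<le> b"
  shows "H a b = 0"
proof -
  have bisect: "norm (H c d) \<le> C * (d - c)^2 / 2^n" if "a \<le> c" "c \<le> d" "d \<le> b" for n c d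
    using that
  proof (induction n arbitrary: c d)
    case 0
    then show ?case using bound by simp
  next
    case (Suc n)
    define m where "m = (c + d) / 2"
    have "norm (H c d) \<le> norm (H c m) + norm (H m d)"
      using add[of c m d] Suc.prems by (simp add: m_def norm_triangle_ineq)
    also have "\<dots> \<le> C * (m - c)^2 / 2^n + C * (d - m)^2 / 2^n"
      using Suc.prems by (intro add_mono Suc.IH) (auto simp: m_def)
    also have "\<dots> = C * (d - c)^2 / 2^Suc n"
      by (simp add: m_def power2_eq_square field_simps)
    finally show ?case .
  qed
  have "(\<lambda>n. C * (b - a)^2 / 2^n) \<longlonglongrightarrow> 0"
    by (rule LIMSEQ_divide_realpow_zero) simp
  then have "norm (H a b) \<le> 0"
    using bisect \<open>a \<le> b\<close> by (intro LIMSEQ_le_const) auto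
  then show ?thesis by simp
qed

lemma product_rule_defect_bound:
  fixes prod :: "'a::real_normed_vector \<Rightarrow> 'b::real_normed_vector \<Rightarrow> 'c::real_normed_vector"
  assumes bb: "bounded_bilinear prod"
    and Kp: "\<And>x y. norm (prod x y) \<le> norm x * norm y * Kp" "Kp \<ge> 0"
    and "c \<le> d"
    and f: "(f has_integral (F d - F c)) {c..d}" and g: "(g has_integral (G d - G c)) {c..d}"
    and h: "((\<lambda>s. prod (f s) (G s) + prod (F s) (g s)) has_integral I) {c..d}"
    and bounds: "\<And>s. s \<in> {c..d} \<Longrightarrow> norm (f s) \<le> K \<and> norm (g s) \<le> K
                      \<and> norm (F s - F c) \<le> K * (s - c) \<and> norm (G d - G s) \<le> K * (d - s)"
  shows "norm (prod (F d) (G d) - prod (F c) (G c) - I) \<le> 2 * Kp * K^2 * (d - c)^2"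
proof -
  interpret bounded_bilinear prod by (fact bb)
  have "((\<lambda>s. prod (f s) (G d) + prod (F c) (g s) - (prod (f s) (G s) + prod (F s) (g s)))
          has_integral (prod (F d - F c) (G d) + prod (F c) (G d - G c) - I)) {c..d}"
    using has_integral_linear[OF f bounded_linear_left] has_integral_linear[OF g bounded_linear_right] h
    by (intro has_integral_diff has_integral_add) (auto simp: o_def)
  then have defect: "((\<lambda>s. prod (f s) (G d) + prod (F c) (g s) - (prod (f s) (G s) + prod (F s) (g s)))
          has_integral (prod (F d) (G d) - prod (F c) (G c) - I)) {c..d}"
    by (simp add: diff_left diff_right)
  have "norm (prod (f s) (G d) + prod (F c) (g s) - (prod (f s) (G s) + prod (F s) (g s)))
                   \<le> 2 * Kp * K^2 * (d - c)" if s: "s \<in> {c..d}" for s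
  proof -
    have "prod (f s) (G d) + prod (F c) (g s) - (prod (f s) (G s) + prod (F s) (g s))
            = prod (f s) (G d - G s) - prod (F s - F c) (g s)"
      by (simp add: diff_left diff_right)
    also have "norm \<dots> \<le> norm (f s) * norm (G d - G s) * Kp + norm (F s - F c) * norm (g s) * Kp"
      by (rule order.trans[OF norm_triangle_ineq4 add_mono[OF Kp(1) Kp(1)]])
    also have "\<dots> \<le> K * (K * (d - c)) * Kp + K * (d - c) * K * Kp"
    proof -
      have "K \<ge> 0" using bounds[OF s] norm_ge_zero[of "f s"] by linarith
      moreover have "K * (d - s) \<le> K * (d - c)" "K * (s - c) \<le> K * (d - c)"
        using \<open>K \<ge> 0\<close> s by (simp_all add: mult_left_mono)
      ultimately have "norm (G d - G s) \<le> K * (d - c)" "norm (F s - F c) \<le> K * (d - c)"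
        using bounds[OF s] by linarith+
      with \<open>K \<ge> 0\<close> have "norm (f s) * norm (G d - G s) \<le> K * (K * (d - c))"
        "norm (F s - F c) * norm (g s) \<le> K * (d - c) * K"
        using bounds[OF s] by (auto intro: mult_mono')
      then show ?thesis using Kp(2) by (intro add_mono mult_right_mono)
    qed
    finally show ?thesis by (simp add: power2_eq_square algebra_simps)
  qed
  then have "norm (prod (F d) (G d) - prod (F c) (G c) - I) \<le> 2 * Kp * K^2 * (d - c) * (d - c)"
    by (rule has_integral_norm_le_length[OF defect \<open>c \<le> d\<close>])
  then show ?thesis by (simp add: power2_eq_square mult.assoc)
qed

text \<open>Integration by parts for functions that are only indefinite integrals: the defect
  $H(c,d)$ of the product rule on $[c,d]$ is additive and $O((d-c)^2)$, hence zero.\<close>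

lemma has_integral_product_rule:
  fixes prod :: "'a::banach \<Rightarrow> 'b::banach \<Rightarrow> 'c::banach" and a b :: real
  assumes bb: "bounded_bilinear prod" and "a \<le> b"
    and F: "\<And>t. t \<in> {a..b} \<Longrightarrow> (f has_integral (F t - F a)) {a..t}"
    and G: "\<And>t. t \<in> {a..b} \<Longrightarrow> (g has_integral (G t - G a)) {a..t}"
    and K: "\<And>s. s \<in> {a..b} \<Longrightarrow> norm (f s) \<le> K \<and> norm (g s) \<le> K"
    and "(\<lambda>s. prod (f s) (G s)) integrable_on {a..b}" "(\<lambda>s. prod (F s) (g s)) integrable_on {a..b}"
  shows "((\<lambda>s. prod (f s) (G s) + prod (F s) (g s)) has_integral
            (prod (F b) (G b) - prod (F a) (G a))) {a..b}"
proof -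
  interpret bounded_bilinear prod by (fact bb)
  obtain Kp where Kp: "Kp > 0" "\<And>x y. norm (prod x y) \<le> norm x * norm y * Kp"
    using pos_bounded by blast
  define h where "h = (\<lambda>s. prod (f s) (G s) + prod (F s) (g s))"
  have h_int: "h integrable_on {a..b}" unfolding h_def using assms(6,7) by (rule integrable_add)
  have h_sub: "(h has_integral integral {c..d} h) {c..d}" if "a \<le> c" "d \<le> b" for c d
    using integrable_subinterval_real[of h a b c d] h_int that by (simp add: integrable_integral)
  define H where "H c d = prod (F d) (G d) - prod (F c) (G c) - integral {c..d} h" for c d
  have increment: "(f has_integral (F d - F c)) {c..d}" "(g has_integral (G d - G c)) {c..d}"
    if "a \<le> c" "c \<le> d" "d \<le> b" for c d
  proof -
    have "c \<in> {a..b}" "d \<in> {a..b}" using that by auto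
    then show "(f has_integral (F d - F c)) {c..d}" "(g has_integral (G d - G c)) {c..d}"
      using has_integral_interval_diff[OF F[of d] F[of c]] has_integral_interval_diff[OF G[of d] G[of c]]
        that by simp_all
  qed
  have "H a b = 0"
  proof (rule additive_quadratic_bounded_zero[OF _ _ \<open>a \<le> b\<close>])
    fix c d e assume "a \<le> c" "c \<le> d" "d \<le> e" "e \<le> b"
    then have "integral {c..d} h + integral {d..e} h = integral {c..e} h"
      using Henstock_Kurzweil_Integration.integral_combine[of c d e h]
          has_integral_integrable[OF h_sub[of c e]] by simp
    then show "H c e = H c d + H d e" unfolding H_def by (simp add: algebra_simps)
  next
    fix c d assume cd: "a \<le> c" "c \<le> d" "d \<le> b"
    have FG: "norm (F s - F c) \<le> K * (s - c) \<and> norm (G d - G s) \<le> K * (d - s)" if "s \<in> {c..d}" for s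
      using has_integral_norm_le_length[OF increment(1)[of c s]]
        has_integral_norm_le_length[OF increment(2)[of s d]] K cd that by auto
    show "norm (H c d) \<le> 2 * Kp * K^2 * (d - c)^2"
      unfolding H_def h_def
      by (rule product_rule_defect_bound[OF bb Kp(2) _ cd(2) increment[OF cd]
          h_sub[OF cd(1,3), unfolded h_def]])
        (use Kp(1) K cd FG in auto)
  qed
  then show ?thesis using h_sub[of a b] \<open>a \<le> b\<close> unfolding H_def h_def by simp
qed

lemma integrable_on_if_measurable_bounded:
  fixes f :: "real \<Rightarrow> 'a::euclidean_space"
  assumes "f \<in> borel_measurable (lebesgue_on {a..b})" "\<And>s. s \<in> {a..b} \<Longrightarrow> norm (f s) \<le> B"
    and "{c..d} \<subseteq> {a..b}"
  shows "f integrable_on {c..d}"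
proof -
  have "f integrable_on {a..b}"
    by (rule measurable_bounded_by_integrable_imp_integrable[OF assms(1) integrable_const_ivl
        assms(2)]) auto
  then show ?thesis using integrable_subinterval_real assms(3) by blast
qed

definition bounded_measurable_on :: "real set \<Rightarrow> (real \<Rightarrow> 'a::euclidean_space) \<Rightarrow> bool" where
  "bounded_measurable_on S f \<longleftrightarrow> f \<in> borel_measurable (lebesgue_on S) \<and> bounded (f ` S)"

lemma bounded_measurable_on_continuous:
  "continuous_on {a..b} f \<Longrightarrow> bounded_measurable_on {a..b} f"
  unfolding bounded_measurable_on_def
  by (simp add: continuous_imp_measurable_on_sets_lebesgue compact_imp_bounded compact_continuous_image)

lemma bounded_measurable_on_subset:
  "bounded_measurable_on S f \<Longrightarrow> T \<subseteq> S \<Longrightarrow> bounded_measurable_on T f"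
  unfolding bounded_measurable_on_def
  by (meson bounded_subset image_mono measurable_restrict_mono)

lemma bounded_measurable_on_norm_le:
  assumes "bounded_measurable_on S f"
  obtains K where "\<And>s. s \<in> S \<Longrightarrow> norm (f s) \<le> K"
  using assms unfolding bounded_measurable_on_def bounded_iff by (meson imageI)

lemma bounded_measurable_on_bilinear:
  assumes h: "bounded_bilinear h" and "S \<in> sets lebesgue"
    and f: "bounded_measurable_on S f" and g: "bounded_measurable_on S g"
  shows "bounded_measurable_on S (\<lambda>s. h (f s) (g s))"
proof -
  have "bilinear h" using h bilinear_conv_bounded_bilinear by blast
  then have "(\<lambda>s. h (f s) (g s)) \<in> borel_measurable (lebesgue_on S)"
    by (rule borel_measurable_bilinear)
      (use f g \<open>S \<in> sets lebesgue\<close> in \<open>simp_all add: bounded_measurable_on_def\<close>)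
  moreover obtain Kh where Kh: "\<And>x y. norm (h x y) \<le> norm x * norm y * Kh" "Kh \<ge> 0"
    using bounded_bilinear.nonneg_bounded[OF h] by blast
  obtain Bf Bg where "\<And>s. s \<in> S \<Longrightarrow> norm (f s) \<le> Bf" "\<And>s. s \<in> S \<Longrightarrow> norm (g s) \<le> Bg"
    using f g bounded_measurable_on_norm_le by metis
  then have "norm (h (f s) (g s)) \<le> Bf * Bg * Kh" if "s \<in> S" for s
  proof -
    have "norm (f s) * norm (g s) \<le> Bf * Bg"
      using that \<open>\<And>s. s \<in> S \<Longrightarrow> norm (f s) \<le> Bf\<close> \<open>\<And>s. s \<in> S \<Longrightarrow> norm (g s) \<le> Bg\<close>
      by (intro mult_mono') auto
    then show ?thesis using Kh(1)[of "f s" "g s"] mult_right_mono[OF _ Kh(2)] by (meson order_trans)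
  qed
  then have "bounded ((\<lambda>s. h (f s) (g s)) ` S)" unfolding bounded_iff by fast
  ultimately show ?thesis unfolding bounded_measurable_on_def by blast
qed

lemma integrable_on_if_bounded_measurable_on:
  fixes f :: "real \<Rightarrow> 'a::euclidean_space"
  assumes "bounded_measurable_on {a..b} f" "{c..d} \<subseteq> {a..b}"
  shows "f integrable_on {c..d}"
proof -
  obtain B where "\<And>s. s \<in> {a..b} \<Longrightarrow> norm (f s) \<le> B"
    using assms(1) bounded_measurable_on_norm_le by blast
  then show ?thesis
    using assms(1) by (intro integrable_on_if_measurable_bounded[OF _ _ assms(2)])
      (simp_all add: bounded_measurable_on_def)
qed

lemma has_integral_product_rule_bounded_measurable:
  fixes prod :: "'a::euclidean_space \<Rightarrow> 'b::euclidean_space \<Rightarrow> 'c::euclidean_space" and a b :: real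
  assumes bb: "bounded_bilinear prod" and "a \<le> b"
    and F: "\<And>t. t \<in> {a..b} \<Longrightarrow> (f has_integral (F t - F a)) {a..t}"
    and G: "\<And>t. t \<in> {a..b} \<Longrightarrow> (g has_integral (G t - G a)) {a..t}"
    and f: "bounded_measurable_on {a..b} f" and g: "bounded_measurable_on {a..b} g"
  shows "((\<lambda>s. prod (f s) (G s) + prod (F s) (g s)) has_integral
            (prod (F b) (G b) - prod (F a) (G a))) {a..b}"
proof -
  obtain Kf Kg where "\<And>s. s \<in> {a..b} \<Longrightarrow> norm (f s) \<le> Kf" "\<And>s. s \<in> {a..b} \<Longrightarrow> norm (g s) \<le> Kg"
    using f g bounded_measurable_on_norm_le by metis
  then have K: "norm (f s) \<le> max Kf Kg \<and> norm (g s) \<le> max Kf Kg" if "s \<in> {a..b}" for s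
    using that by (auto simp: le_max_iff_disj)
  have FG: "bounded_measurable_on {a..b} F" "bounded_measurable_on {a..b} G"
    using bounded_measurable_on_continuous continuous_on_if_has_integral_increments F G by blast+
  have "(\<lambda>s. prod (f s) (G s)) integrable_on {a..b}" "(\<lambda>s. prod (F s) (g s)) integrable_on {a..b}"
    by (rule integrable_on_if_bounded_measurable_on[OF bounded_measurable_on_bilinear[OF bb _ f FG(2)]],
        simp_all)
      (rule integrable_on_if_bounded_measurable_on[OF bounded_measurable_on_bilinear[OF bb _ FG(1) g]],
        simp_all)
  from has_integral_product_rule[OF bb \<open>a \<le> b\<close> F G K this] show ?thesis .
qed

lemma bilinear_matrix_matrix_mult: "bilinear (\<lambda>(A::real^'n^'m) (B::real^'p^'n). A ** B)"
  unfolding bilinear_def linear_iff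
  by (auto simp: matrix_matrix_mult_def vec_eq_iff sum.distrib algebra_simps sum_distrib_left)

lemma bilinear_matrix_vector_mult: "bilinear (\<lambda>(A::real^'n^'m) (x::real^'n). A *v x)"
  unfolding bilinear_def linear_iff
  by (auto simp: matrix_vector_right_distrib matrix_vector_mult_add_rdistrib
      matrix_vector_mult_scaleR scaleR_matrix_vector_assoc)

lemma bounded_bilinear_matrix_matrix_mult: "bounded_bilinear (\<lambda>(A::real^'n^'m) (B::real^'p^'n). A ** B)"
  using bilinear_matrix_matrix_mult bilinear_conv_bounded_bilinear by blast

lemma bounded_bilinear_matrix_vector_mult: "bounded_bilinear (\<lambda>(A::real^'n^'m) (x::real^'n). A *v x)"
  using bilinear_matrix_vector_mult bilinear_conv_bounded_bilinear by blast

lemma bounded_bilinear_neg_matrix_mult_swap: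
  "bounded_bilinear (\<lambda>(A::real^'n^'n) (X::real^'n^'m). - (X ** A))"
proof -
  have "bilinear (\<lambda>(A::real^'n^'n) (X::real^'n^'m). - (X ** A))"
    unfolding bilinear_def linear_iff
    by (auto simp: matrix_matrix_mult_def vec_eq_iff sum.distrib algebra_simps sum_distrib_left)
  then show ?thesis using bilinear_conv_bounded_bilinear by blast
qed

lemma bounded_linear_transpose: "bounded_linear (transpose :: real^'n^'m \<Rightarrow> real^'m^'n)"
proof -
  have "linear (transpose :: real^'n^'m \<Rightarrow> real^'m^'n)"
    by (rule linearI) (auto simp: transpose_def vec_eq_iff)
  then show ?thesis using linear_conv_bounded_linear by blast
qed

lemma matrix_inv_eqI:
  fixes A B :: "real^'n^'n"
  assumes "B ** A = mat 1"
  shows "matrix_inv A = B"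
  unfolding matrix_inv_def
proof (rule some_equality)
  show "A ** B = mat 1 \<and> B ** A = mat 1" using assms matrix_left_right_inverse by blast
  fix A' assume "A ** A' = mat 1 \<and> A' ** A = mat 1"
  then have "A' = (B ** A) ** A'" using assms by simp
  also have "\<dots> = B ** (A ** A')" by (simp add: matrix_mul_assoc)
  also have "\<dots> = B" using \<open>A ** A' = mat 1 \<and> A' ** A = mat 1\<close> by simp
  finally show "A' = B" .
qed

section \<open>Linear integral equations\<close>

lemma power_over_fact_tendsto_zero: "(\<lambda>j. (x::real)^j / fact j) \<longlonglongrightarrow> 0"
proof -
  have "summable (\<lambda>n. x ^ n /\<^sub>R fact n)" using exp_converges sums_summable by blast
  then have "(\<lambda>n. x ^ n /\<^sub>R fact n) \<longlonglongrightarrow> 0" by (rule summable_LIMSEQ_zero)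
  then show ?thesis by (simp add: divide_inverse mult.commute)
qed

lemma has_integral_power_over_fact:
  fixes a t L c :: real
  assumes "a \<le> t"
  shows "((\<lambda>s. L * (c * (L * (s - a))^j / fact j)) has_integral
           c * (L * (t - a))^Suc j / fact (Suc j)) {a..t}"
proof -
  have "((\<lambda>s. (s - a)^j) has_integral (t - a)^Suc j / real (Suc j) - (a - a)^Suc j / real (Suc j)) {a..t}"
  proof (rule fundamental_theorem_of_calculus[OF assms])
    fix x assume "x \<in> {a..t}"
    show "((\<lambda>s. (s - a)^Suc j / real (Suc j)) has_vector_derivative (x - a)^j) (at x within {a..t})"
      unfolding has_real_derivative_iff_has_vector_derivative[symmetric]
      by (rule derivative_eq_intros refl | simp)+
  qed
  then have "((\<lambda>s. (L^Suc j * c / fact j) * (s - a)^j) has_integral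
               (L^Suc j * c / fact j) * ((t - a)^Suc j / real (Suc j))) {a..t}"
    by (intro has_integral_mult_right) simp
  moreover have
      "(L^Suc j * c / fact j) * ((t - a)^Suc j / real (Suc j)) = c * (L * (t - a))^Suc j / fact (Suc j)"
    by (simp add: power_mult_distrib mult_ac del: power_Suc)
  ultimately show ?thesis by (simp add: power_mult_distrib mult_ac)
qed

lemma gronwall_zero:
  fixes e g :: "real \<Rightarrow> 'a::banach"
  assumes "a \<le> b" and cont: "continuous_on {a..b} e"
    and int: "\<And>t. t \<in> {a..b} \<Longrightarrow> (g has_integral e t) {a..t}"
    and bound: "\<And>s. s \<in> {a..b} \<Longrightarrow> norm (g s) \<le> L * norm (e s)"
    and "L \<ge> 0" and t: "t \<in> {a..b}"
  shows "e t = 0"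
proof -
  obtain m where m: "\<And>t. t \<in> {a..b} \<Longrightarrow> norm (e t) \<le> m"
    using compact_imp_bounded[OF compact_continuous_image[OF cont compact_Icc]] bounded_iff
    by (metis imageI)
  have iterate: "\<forall>t\<in>{a..b}. norm (e t) \<le> m * (L * (t - a))^j / fact j" for j
  proof (induction j)
    case 0
    then show ?case using m by simp
  next
    case (Suc j)
    show ?case
    proof
      fix t assume t: "t \<in> {a..b}"
      have "norm (e t) = norm (integral {a..t} g)" using int[OF t] by (simp add: integral_unique)
      also have "\<dots> \<le> integral {a..t} (\<lambda>s. L * (m * (L * (s - a))^j / fact j))"
      proof (rule integral_norm_bound_integral)
        show "g integrable_on {a..t}" using int[OF t] by blast
        show "(\<lambda>s. L * (m * (L * (s - a))^j / fact j)) integrable_on {a..t}"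
          using has_integral_power_over_fact[of a t L m j] t by auto
        fix s assume "s \<in> {a..t}"
        then have s: "s \<in> {a..b}" using t by auto
        show "norm (g s) \<le> L * (m * (L * (s - a))^j / fact j)"
          using bound[OF s] mult_left_mono[OF Suc.IH[rule_format, OF s] \<open>L \<ge> 0\<close>] by linarith
      qed
      also have "\<dots> = m * (L * (t - a))^Suc j / fact (Suc j)"
        using t by (intro integral_unique has_integral_power_over_fact) auto
      finally show "norm (e t) \<le> m * (L * (t - a))^Suc j / fact (Suc j)" .
    qed
  qed
  have "(\<lambda>j. m * ((L * (t - a))^j / fact j)) \<longlonglongrightarrow> m * 0"
    by (intro tendsto_mult_left power_over_fact_tendsto_zero)
  then have "norm (e t) \<le> m * 0"
    by (rule LIMSEQ_le_const) (use iterate t in \<open>auto simp: times_divide_eq_right\<close>)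
  then show ?thesis by simp
qed

lemma affine_integral_equation_unique:
  fixes M :: "real \<Rightarrow> real^'n^'n" and g z w :: "real \<Rightarrow> real^'n"
  assumes z: "\<And>t. t \<in> {a..b} \<Longrightarrow> ((\<lambda>s. M s *v z s + g s) has_integral (z t - z a)) {a..t}"
    and w: "\<And>t. t \<in> {a..b} \<Longrightarrow> ((\<lambda>s. M s *v w s + g s) has_integral (w t - w a)) {a..t}"
    and "z a = w a" and M: "\<And>s. s \<in> {a..b} \<Longrightarrow> norm (M s) \<le> K" and t: "t \<in> {a..b}"
  shows "z t = w t"
proof -
  obtain Kp where Kp: "Kp > 0" "\<And>(A::real^'n^'n) x. norm (A *v x) \<le> norm A * norm x * Kp"
    using bounded_bilinear.pos_bounded[OF bounded_bilinear_matrix_vector_mult] by fastforce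
  have "a \<le> b" using t by auto
  then have "K \<ge> 0" using M[of a] by (meson atLeastAtMost_iff norm_ge_zero order_trans order_refl)
  define e where "e s = z s - w s" for s
  have "e t = 0"
  proof (rule gronwall_zero[OF \<open>a \<le> b\<close> _ _ _ _ t, where g="\<lambda>s. M s *v e s" and L="K * Kp"])
    show "continuous_on {a..b} e"
      unfolding e_def using continuous_on_if_has_integral_increments[OF z]
        continuous_on_if_has_integral_increments[OF w] by (rule continuous_on_diff)
    show "((\<lambda>s. M s *v e s) has_integral e t') {a..t'}" if "t' \<in> {a..b}" for t'
      using has_integral_diff[OF z[OF that] w[OF that]] \<open>z a = w a\<close>
      by (simp add: e_def matrix_vector_mult_diff_distrib)
    show "norm (M s *v e s) \<le> K * Kp * norm (e s)" if "s \<in> {a..b}" for s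
    proof -
      have "norm (M s *v e s) \<le> norm (M s) * norm (e s) * Kp" by (rule Kp(2))
      also have "\<dots> \<le> K * norm (e s) * Kp" using M[OF that] Kp(1) by (intro mult_right_mono) auto
      finally show ?thesis by (simp add: mult_ac)
    qed
    show "K * Kp \<ge> 0" using \<open>K \<ge> 0\<close> Kp(1) by simp
  qed
  then show ?thesis by (simp add: e_def)
qed

text \<open>Solutions of $X(t) = X_0 + \int_0^t M(s) \cdot X(s)\,ds$ as uniform limits of the Picard
  iterates.\<close>

locale linear_integral_equation =
  fixes prod :: "'m::euclidean_space \<Rightarrow> 'a::euclidean_space \<Rightarrow> 'a" and M :: "real \<Rightarrow> 'm" and r L :: real
  assumes bounded_bilinear_prod: "bounded_bilinear prod"
    and measurable_M: "M \<in> borel_measurable (lebesgue_on {0..r})"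
    and kernel_le: "\<And>s y. s \<in> {0..r} \<Longrightarrow> norm (prod (M s) y) \<le> L * norm y"
    and nonneg_L: "L \<ge> 0" and nonneg_r: "r \<ge> 0"
begin

lemma kernel_integrable:
  assumes "continuous_on {0..r} Y" "t \<in> {0..r}"
  shows "(\<lambda>s. prod (M s) (Y s)) integrable_on {0..t}"
proof -
  obtain B where B: "\<And>s. s \<in> {0..r} \<Longrightarrow> norm (Y s) \<le> B"
    using compact_imp_bounded[OF compact_continuous_image[OF assms(1) compact_Icc]] bounded_iff
    by (metis imageI)
  have "bilinear prod" using bounded_bilinear_prod bilinear_conv_bounded_bilinear by blast
  then have "(\<lambda>s. prod (M s) (Y s)) \<in> borel_measurable (lebesgue_on {0..r})"
    by (rule borel_measurable_bilinear[OF _ measurable_M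
        continuous_imp_measurable_on_sets_lebesgue[OF assms(1)]])
      auto
  moreover have "norm (prod (M s) (Y s)) \<le> L * B" if "s \<in> {0..r}" for s
    using kernel_le[OF that, of "Y s"] mult_left_mono[OF B[OF that] nonneg_L] by linarith
  ultimately show ?thesis
    by (rule integrable_on_if_measurable_bounded) (use assms(2) in auto)
qed

lemma kernel_integral_power_bound:
  assumes "continuous_on {0..r} Y" "t \<in> {0..r}"
    and Y: "\<And>s. s \<in> {0..t} \<Longrightarrow> norm (Y s) \<le> c * (L * s)^j / fact j"
  shows "norm (integral {0..t} (\<lambda>s. prod (M s) (Y s))) \<le> c * (L * t)^Suc j / fact (Suc j)"
proof -
  have "norm (integral {0..t} (\<lambda>s. prod (M s) (Y s))) \<le> integral {0..t}
      (\<lambda>s. L * (c * (L * (s - 0))^j / fact j))"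
  proof (rule integral_norm_bound_integral)
    show "(\<lambda>s. prod (M s) (Y s)) integrable_on {0..t}" by (rule kernel_integrable[OF assms(1,2)])
    show "(\<lambda>s. L * (c * (L * (s - 0))^j / fact j)) integrable_on {0..t}"
      using has_integral_power_over_fact[of 0 t L c j] assms(2) by auto
    fix s assume s: "s \<in> {0..t}"
    then show "norm (prod (M s) (Y s)) \<le> L * (c * (L * (s - 0))^j / fact j)"
      using kernel_le[of s "Y s"] mult_left_mono[OF Y[OF s] nonneg_L] assms(2) by auto
  qed
  also have "\<dots> = c * (L * (t - 0))^Suc j / fact (Suc j)"
    by (rule integral_unique[OF has_integral_power_over_fact]) (use assms(2) in auto)
  finally show ?thesis by simp
qed

lemma kernel_integral_tendsto:
  assumes lim: "uniform_limit {0..r} Y X sequentially"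
    and cont: "\<And>n. continuous_on {0..r} (Y n)" "continuous_on {0..r} X" and t: "t \<in> {0..r}"
  shows "(\<lambda>n. integral {0..t} (\<lambda>s. prod (M s) (Y n s))) \<longlonglongrightarrow> integral {0..t} (\<lambda>s. prod (M s) (X s))"
proof (rule uniform_limit_has_integral_tendsto)
  show "uniform_limit {0..t} (\<lambda>n s. prod (M s) (Y n s)) (\<lambda>s. prod (M s) (X s)) sequentially"
  proof (rule uniform_limitI)
    fix e :: real assume "e > 0"
    then have "e / (L + 1) > 0" using nonneg_L by simp
    with uniform_limitD[OF lim]
    have "\<forall>\<^sub>F n in sequentially. \<forall>s\<in>{0..r}. dist (Y n s) (X s) < e / (L + 1)" by blast
    then show "\<forall>\<^sub>F n in sequentially. \<forall>s\<in>{0..t}. dist (prod (M s) (Y n s)) (prod (M s) (X s)) < e"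
    proof eventually_elim
      case (elim n)
      show ?case
      proof
        fix s assume "s \<in> {0..t}"
        then have s: "s \<in> {0..r}" using t by auto
        have "dist (prod (M s) (Y n s)) (prod (M s) (X s)) \<le> L * dist (Y n s) (X s)"
          using kernel_le[OF s, of "Y n s - X s"]
          by (simp add: dist_norm bounded_bilinear.diff_right[OF bounded_bilinear_prod])
        also have "\<dots> \<le> L * (e / (L + 1))"
          using elim s nonneg_L by (intro mult_left_mono) (auto intro: less_imp_le)
        also have "\<dots> < e" using \<open>e > 0\<close> nonneg_L by (simp add: field_simps)
        finally show "dist (prod (M s) (Y n s)) (prod (M s) (X s)) < e" .
      qed
    qed
  qed
  show "0 \<le> t" using t by simp
  show "((\<lambda>s. prod (M s) (Y n s)) has_integral integral {0..t} (\<lambda>s. prod (M s) (Y n s))) {0..t}" for n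
    by (rule integrable_integral[OF kernel_integrable[OF cont(1) t]])
  show "((\<lambda>s. prod (M s) (X s)) has_integral integral {0..t} (\<lambda>s. prod (M s) (X s))) {0..t}"
    by (rule integrable_integral[OF kernel_integrable[OF cont(2) t]])
qed

definition picard :: "'a \<Rightarrow> nat \<Rightarrow> real \<Rightarrow> 'a" where
  "picard X0 j = rec_nat (\<lambda>t. X0) (\<lambda>_ P t. X0 + integral {0..t} (\<lambda>s. prod (M s) (P s))) j"

lemma picard_0 [simp]: "picard X0 0 t = X0"
  and picard_Suc: "picard X0 (Suc j) t = X0 + integral {0..t} (\<lambda>s. prod (M s) (picard X0 j s))"
  by (simp_all add: picard_def)

lemma continuous_on_picard: "continuous_on {0..r} (picard X0 j)"
proof (induction j)
  case (Suc j)
  have "(\<lambda>s. prod (M s) (picard X0 j s)) integrable_on {0..r}"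
    using kernel_integrable[OF Suc] nonneg_r by auto
  then show ?case
    unfolding picard_Suc[abs_def] by (simp add: continuous_on_add indefinite_integral_continuous_1)
qed simp

lemma picard_increment:
  assumes "t \<in> {0..r}"
  shows "picard X0 (Suc (Suc j)) t - picard X0 (Suc j) t
           = integral {0..t} (\<lambda>s. prod (M s) (picard X0 (Suc j) s - picard X0 j s))"
proof -
  have "integral {0..t} (\<lambda>s. prod (M s) (picard X0 (Suc j) s)) - integral {0..t}
      (\<lambda>s. prod (M s) (picard X0 j s))
          = integral {0..t} (\<lambda>s. prod (M s) (picard X0 (Suc j) s) - prod (M s) (picard X0 j s))"
    by (rule integral_diff[symmetric]) (intro kernel_integrable continuous_on_picard assms)+
  then show ?thesis
    unfolding picard_Suc[of X0 "Suc j" t] picard_Suc[of X0 j t]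
    by (simp add: bounded_bilinear.diff_right[OF bounded_bilinear_prod])
qed

lemma picard_increment_bound:
  assumes "t \<in> {0..r}"
  shows "norm (picard X0 (Suc j) t - picard X0 j t) \<le> norm X0 * (L * t)^Suc j / fact (Suc j)"
  using assms
proof (induction j arbitrary: t)
  case 0
  then show ?case
    using kernel_integral_power_bound[of "\<lambda>_. X0" t "norm X0" 0] by (simp add: picard_Suc)
next
  case (Suc j)
  then show ?case
    unfolding picard_increment[OF Suc.prems]
    by (intro kernel_integral_power_bound continuous_on_diff continuous_on_picard) auto
qed

lemma picard_uniform_limit:
  "uniform_limit {0..r} (picard X0) (\<lambda>t. X0 + (\<Sum>i. picard X0 (Suc i) t - picard X0 i t)) sequentially"
proof -
  define c where "c i = norm X0 * (L * r)^Suc i / fact (Suc i)" for i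
  have "summable (\<lambda>n. (L * r)^n /\<^sub>R fact n)" using exp_converges sums_summable by blast
  then have "summable (\<lambda>n. (L * r)^Suc n /\<^sub>R fact (Suc n))"
    by (rule iffD2[OF summable_Suc_iff])
  then have "summable (\<lambda>n. norm X0 * ((L * r)^Suc n /\<^sub>R fact (Suc n)))"
    by (rule summable_mult)
  then have "summable c" unfolding c_def by (simp add: divide_inverse mult_ac)
  moreover have "norm (picard X0 (Suc i) t - picard X0 i t) \<le> c i" if t: "t \<in> {0..r}" for i t
  proof -
    have "norm X0 * (L * t)^Suc i / fact (Suc i) \<le> c i"
      unfolding c_def using t nonneg_L
      by (intro divide_right_mono mult_left_mono power_mono) (auto intro: mult_left_mono)
    then show ?thesis using picard_increment_bound[OF t, of X0 i] by linarith
  qed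
  ultimately have "uniform_limit {0..r} (\<lambda>n t. \<Sum>i<n. picard X0 (Suc i) t - picard X0 i t)
                     (\<lambda>t. \<Sum>i. picard X0 (Suc i) t - picard X0 i t) sequentially"
    by (rule Weierstrass_m_test[rotated])
  from uniform_limit_add[OF uniform_limit_const[where c="\<lambda>_. X0"] this]
  have "uniform_limit {0..r} (\<lambda>n t. X0 + (\<Sum>i<n. picard X0 (Suc i) t - picard X0 i t))
          (\<lambda>t. X0 + (\<Sum>i. picard X0 (Suc i) t - picard X0 i t)) sequentially" .
  moreover have "(\<lambda>n t. X0 + (\<Sum>i<n. picard X0 (Suc i) t - picard X0 i t)) = picard X0"
  proof (intro ext)
    fix n t
    show "X0 + (\<Sum>i<n. picard X0 (Suc i) t - picard X0 i t) = picard X0 n t"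
      using sum_lessThan_telescope[of "\<lambda>i. picard X0 i t" n] by simp
  qed
  ultimately show ?thesis by (simp only:)
qed

lemma solution_exists:
  "\<exists>X. X 0 = X0 \<and> continuous_on {0..r} X \<and>
       (\<forall>t\<in>{0..r}. ((\<lambda>s. prod (M s) (X s)) has_integral (X t - X0)) {0..t})"
proof -
  define X where "X t = X0 + (\<Sum>i. picard X0 (Suc i) t - picard X0 i t)" for t
  have lim: "uniform_limit {0..r} (picard X0) X sequentially"
    unfolding X_def[abs_def] by (rule picard_uniform_limit)
  have cont: "continuous_on {0..r} X"
    by (rule uniform_limit_theorem[OF _ lim]) (auto simp: continuous_on_picard)
  have "((\<lambda>s. prod (M s) (X s)) has_integral (X t - X0)) {0..t}" if t: "t \<in> {0..r}" for t
  proof -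
    have "(\<lambda>n. integral {0..t} (\<lambda>s. prod (M s) (picard X0 n s))) \<longlonglongrightarrow> integral {0..t} (\<lambda>s. prod (M s) (X s))"
      by (rule kernel_integral_tendsto[OF lim continuous_on_picard cont t])
    then have "(\<lambda>n. picard X0 (Suc n) t) \<longlonglongrightarrow> X0 + integral {0..t} (\<lambda>s. prod (M s) (X s))"
      unfolding picard_Suc by (intro tendsto_add tendsto_const)
    moreover have "(\<lambda>n. picard X0 (Suc n) t) \<longlonglongrightarrow> X t"
      using LIMSEQ_Suc[OF tendsto_uniform_limitI[OF lim t]] .
    ultimately have "X t = X0 + integral {0..t} (\<lambda>s. prod (M s) (X s))"
      using LIMSEQ_unique by blast
    then show ?thesis using integrable_integral[OF kernel_integrable[OF cont t]] by simp
  qed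
  moreover have "picard X0 j 0 = X0" for j by (cases j) (simp_all add: picard_Suc)
  then have "X 0 = X0" by (simp add: X_def)
  ultimately show ?thesis using cont by blast
qed

end

lemma linear_integral_equation_solvable:
  fixes prod :: "'m::euclidean_space \<Rightarrow> 'a::euclidean_space \<Rightarrow> 'a" and M :: "real \<Rightarrow> 'm"
  assumes "bounded_bilinear prod" and M: "bounded_measurable_on {0..r} M" and "r \<ge> 0"
  shows "\<exists>X. X 0 = X0 \<and> continuous_on {0..r} X \<and>
           (\<forall>t\<in>{0..r}. ((\<lambda>s. prod (M s) (X s)) has_integral (X t - X0)) {0..t})"
proof -
  obtain K where K: "\<And>s. s \<in> {0..r} \<Longrightarrow> norm (M s) \<le> K"
    using M bounded_measurable_on_norm_le by blast
  obtain Kp where Kp: "Kp \<ge> 0" "\<And>x y. norm (prod x y) \<le> norm x * norm y * Kp"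
    using bounded_bilinear.nonneg_bounded[OF assms(1)] by blast
  have "K \<ge> 0" using order_trans[OF norm_ge_zero K[of 0]] \<open>r \<ge> 0\<close> by simp
  have kernel_le: "norm (prod (M s) y) \<le> K * Kp * norm y" if "s \<in> {0..r}" for s y
  proof -
    have "norm (prod (M s) y) \<le> norm (M s) * norm y * Kp" by (rule Kp(2))
    also have "\<dots> \<le> K * norm y * Kp" using K[OF that] Kp(1) by (intro mult_right_mono) auto
    finally show ?thesis by (simp add: mult_ac)
  qed
  interpret linear_integral_equation prod M r "K * Kp"
    using assms(1,3) M kernel_le \<open>K \<ge> 0\<close> Kp(1) unfolding bounded_measurable_on_def
    by (intro linear_integral_equation.intro) simp_all
  show ?thesis by (rule solution_exists)
qed

lemma set_borel_measurable_iff_lebesgue_on: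
  fixes f :: "real \<Rightarrow> 'a::real_normed_vector"
  assumes "S \<in> sets lebesgue"
  shows "set_borel_measurable lebesgue S f \<longleftrightarrow> f \<in> borel_measurable (lebesgue_on S)"
  unfolding set_borel_measurable_def
  by (subst borel_measurable_restrict_space_iff) (use assms in auto)

lemma measurable_on_shift:
  fixes f :: "real \<Rightarrow> 'a::real_normed_vector"
  assumes "f measurable_on {c..}"
  shows "(\<lambda>s. f (c + s)) measurable_on {0..}"
proof -
  obtain N g where N: "negligible N" and g: "\<And>n. continuous_on UNIV (g n)"
    and lim: "\<And>x. x \<notin> N \<Longrightarrow> (\<lambda>n. g n x) \<longlonglongrightarrow> (if x \<in> {c..} then f x else 0)"
    using assms unfolding measurable_on_def by blast
  show ?thesis unfolding measurable_on_def
  proof (intro exI conjI allI impI)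
    show "negligible ((+) (-c) ` N)" by (rule negligible_translation[OF N])
    show "continuous_on UNIV (\<lambda>s. g n (c + s))" for n
      by (rule continuous_on_compose2[OF g]) (auto intro: continuous_intros)
    fix x assume "x \<notin> (+) (-c) ` N"
    then have "c + x \<notin> N" by (metis add.commute add_uminus_conv_diff diff_add_cancel image_eqI)
    from lim[OF this] show "(\<lambda>n. g n (c + x)) \<longlonglongrightarrow> (if x \<in> {0..} then f (c + x) else 0)"
      by simp
  qed
qed

lemma Linf_loc_borel_measurable: "Linf_loc U u \<Longrightarrow> u \<in> borel_measurable (lebesgue_on {0..})"
  unfolding Linf_loc_def by (simp add: set_borel_measurable_iff_lebesgue_on)

lemma Linf_loc_shift:
  assumes "Linf_loc U u" "c \<ge> 0"
  shows "Linf_loc U (\<lambda>s. u (c + s))"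
proof -
  have "u \<in> borel_measurable (lebesgue_on {c..})"
    using measurable_restrict_mono[OF Linf_loc_borel_measurable[OF assms(1)]] assms(2) by auto
  then have "(\<lambda>s. u (c + s)) measurable_on {0..}"
    by (intro measurable_on_shift) (simp add: measurable_on_iff_borel_measurable)
  moreover have "bounded ((\<lambda>s. u (c + s)) ` {0..T})" for T
  proof (rule bounded_subset)
    show "bounded (u ` {0..c + T})" using assms(1) unfolding Linf_loc_def by blast
    show "(\<lambda>s. u (c + s)) ` {0..T} \<subseteq> u ` {0..c + T}"
      using assms(2) by (auto intro: rev_image_eqI[of "c + _"])
  qed
  ultimately show ?thesis
    using assms unfolding Linf_loc_def
    by (auto simp: set_borel_measurable_iff_lebesgue_on measurable_on_iff_borel_measurable)
qed

lemma Linf_loc_bounded_measurable_on: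
  assumes "Linf_loc U u" "a \<ge> 0"
  shows "bounded_measurable_on {a..b} u" and "u ` {a..b} \<subseteq> U"
proof -
  have "u \<in> borel_measurable (lebesgue_on {a..b})"
    using measurable_restrict_mono[OF Linf_loc_borel_measurable[OF assms(1)]] assms(2) by auto
  moreover have "bounded (u ` {a..b})"
    using assms unfolding Linf_loc_def
        by (meson atLeastatMost_subset_iff bounded_subset image_mono order_refl)
  ultimately show "bounded_measurable_on {a..b} u" unfolding bounded_measurable_on_def by blast
  show "u ` {a..b} \<subseteq> U" using assms unfolding Linf_loc_def by auto
qed

lemma Linf_loc_imp_Linf: "Linf_loc U u \<Longrightarrow> Linf r U u"
  using Linf_loc_bounded_measurable_on[of U u 0 r]
  unfolding Linf_def bounded_measurable_on_def by (auto simp: set_borel_measurable_iff_lebesgue_on)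

lemma continuous_on_if_loc_lipschitz:
  assumes "loc_lipschitz S g"
  shows "continuous_on S g"
  unfolding continuous_on_eq_continuous_within
proof
  fix p assume "p \<in> S"
  then obtain e L where "e > 0" and L: "L-lipschitz_on (cball p e \<inter> S) g"
    using assms unfolding loc_lipschitz_def by blast
  from lipschitz_on_continuous_on[OF L] have "continuous_on (cball p e \<inter> S) g" .
  then have "continuous (at p within (cball p e \<inter> S)) g"
    using \<open>p \<in> S\<close> \<open>e > 0\<close> by (simp add: continuous_on_eq_continuous_within)
  moreover have "at p within S = at p within (cball p e \<inter> S)"
    by (rule at_within_nhd[of p "ball p e"]) (use \<open>e > 0\<close> in auto)
  ultimately show "continuous (at p within S) g" by simp
qed

lemma continuous_on_if_entries_loc_lipschitz:
  assumes "\<forall>i j. loc_lipschitz S (\<lambda>y. C y $ i $ j)"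
  shows "continuous_on S C"
proof -
  have "continuous_on S (\<lambda>y. \<chi> i. \<chi> j. C y $ i $ j)"
    using assms continuous_on_if_loc_lipschitz by (intro continuous_on_vec_lambda) blast
  then show ?thesis by simp
qed

text \<open>The pair $(y, u)$ stays in the compact set
  $y([a,b]) \times \overline{u([a,b])} \subseteq \Omega \times U$.\<close>

lemma bounded_measurable_on_compose_input:
  fixes G :: "'y::euclidean_space \<Rightarrow> 'v::euclidean_space \<Rightarrow> 'c::euclidean_space"
  assumes G: "continuous_on (\<Omega> \<times> U) (\<lambda>(y, v). G y v)" and "closed U"
    and y: "continuous_on {a..b} y" "y ` {a..b} \<subseteq> \<Omega>"
    and u: "bounded_measurable_on {a..b} u" "u ` {a..b} \<subseteq> U"
  shows "bounded_measurable_on {a..b} (\<lambda>s. G (y s) (u s))"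
proof -
  define Kc where "Kc = y ` {a..b} \<times> closure (u ` {a..b})"
  have "compact Kc" unfolding Kc_def
    using compact_continuous_image[OF y(1) compact_Icc] u(1)
    by (intro compact_Times) (auto simp: bounded_measurable_on_def)
  have "Kc \<subseteq> \<Omega> \<times> U" unfolding Kc_def using y(2) closure_minimal[OF u(2) \<open>closed U\<close>] by auto
  then have cont: "continuous_on Kc (\<lambda>(y, v). G y v)" by (rule continuous_on_subset[OF G])
  have in_Kc: "(y s, u s) \<in> Kc" if "s \<in> {a..b}" for s
    unfolding Kc_def using that closure_subset[of "u ` {a..b}"] by auto
  have "(\<lambda>s. (y s, u s)) \<in> lebesgue_on {a..b} \<rightarrow>\<^sub>M restrict_space borel Kc"
    using continuous_imp_measurable_on_sets_lebesgue[OF y(1)] u(1) in_Kc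
    by (intro measurable_restrict_space2 borel_measurable_Pair) (auto simp: bounded_measurable_on_def)
  from measurable_compose[OF this borel_measurable_continuous_on_restrict[OF cont]]
  have "(\<lambda>s. G (y s) (u s)) \<in> borel_measurable (lebesgue_on {a..b})" by simp
  moreover have "bounded ((\<lambda>(y, v). G y v) ` Kc)"
    by (rule compact_imp_bounded[OF compact_continuous_image[OF cont \<open>compact Kc\<close>]])
  then have "bounded ((\<lambda>s. G (y s) (u s)) ` {a..b})"
    by (rule bounded_subset) (use in_Kc in force)
  ultimately show ?thesis unfolding bounded_measurable_on_def by blast
qed

section \<open>The operator P on one window\<close>

locale observation_window =
  fixes A :: "real^'k \<Rightarrow> real^'m \<Rightarrow> real^'n^'n" and b :: "real^'k \<Rightarrow> real^'m \<Rightarrow> real^'n"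
    and C :: "real^'k \<Rightarrow> real^'n^'k" and f :: "real^'k \<Rightarrow> real^'m \<Rightarrow> real^'k"
    and r :: real and y :: "real \<Rightarrow> real^'k" and u :: "real \<Rightarrow> real^'m" and x :: "real \<Rightarrow> real^'n"
  assumes r_pos: "r > 0"
    and measurable_A: "bounded_measurable_on {0..r} (\<lambda>s. A (y s) (u s))"
    and measurable_b: "bounded_measurable_on {0..r} (\<lambda>s. b (y s) (u s))"
    and continuous_C: "continuous_on {0..r} (\<lambda>s. C (y s))"
    and x_eq: "\<And>t. t \<in> {0..r} \<Longrightarrow>
                 ((\<lambda>s. A (y s) (u s) *v x s + b (y s) (u s)) has_integral (x t - x 0)) {0..t}"
    and y_eq: "\<And>t. t \<in> {0..r} \<Longrightarrow>
                 ((\<lambda>s. f (y s) (u s) + C (y s) *v x s) has_integral (y t - y 0)) {0..t}"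
begin

abbreviation "Phi \<equiv> obs_Phi A r y u"
abbreviation "theta \<equiv> obs_theta A b r y u"
abbreviation "q \<equiv> obs_q A C r y u"
abbreviation "Q \<equiv> obs_Q A C r y u"

lemma fundamental_matrix:
  shows Phi_0: "Phi 0 = mat 1" and continuous_on_Phi: "continuous_on {0..r} Phi"
    and Phi_has_integral:
      "\<And>t. t \<in> {0..r} \<Longrightarrow> ((\<lambda>s. A (y s) (u s) ** Phi s) has_integral (Phi t - mat 1)) {0..t}"
proof -
  have "\<exists>X. X 0 = mat 1 \<and> continuous_on {0..r} X \<and>
          (\<forall>t\<in>{0..r}. ((\<lambda>s. A (y s) (u s) ** X s) has_integral (X t - mat 1)) {0..t})"
    using linear_integral_equation_solvable[OF bounded_bilinear_matrix_matrix_mult measurable_A] r_pos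
    by simp
  from someI_ex[OF this[folded obs_Phi_def]]
  show "Phi 0 = mat 1" "continuous_on {0..r} Phi"
    "\<And>t. t \<in> {0..r} \<Longrightarrow> ((\<lambda>s. A (y s) (u s) ** Phi s) has_integral (Phi t - mat 1)) {0..t}"
    by (auto simp: obs_Phi_def)
qed

text \<open>\<open>Psi\<close> solves the adjoint equation $\dot\Psi = -\Psi A$; the product rule shows $\Psi\Phi = I$.\<close>

definition Psi :: "real \<Rightarrow> real^'n^'n" where
  "Psi = (SOME Psi. Psi 0 = mat 1 \<and> continuous_on {0..r} Psi \<and>
     (\<forall>t\<in>{0..r}. ((\<lambda>s. - (Psi s ** A (y s) (u s))) has_integral (Psi t - mat 1)) {0..t}))"

lemma adjoint_matrix:
  shows Psi_0: "Psi 0 = mat 1" and continuous_on_Psi: "continuous_on {0..r} Psi"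
    and Psi_has_integral:
      "\<And>t. t \<in> {0..r} \<Longrightarrow> ((\<lambda>s. - (Psi s ** A (y s) (u s))) has_integral (Psi t - mat 1)) {0..t}"
proof -
  have "\<exists>X. X 0 = mat 1 \<and> continuous_on {0..r} X \<and>
          (\<forall>t\<in>{0..r}. ((\<lambda>s. - (X s ** A (y s) (u s))) has_integral (X t - mat 1)) {0..t})"
    using linear_integral_equation_solvable[OF bounded_bilinear_neg_matrix_mult_swap measurable_A] r_pos
    by simp
  from someI_ex[OF this[folded Psi_def]]
  show "Psi 0 = mat 1" "continuous_on {0..r} Psi"
    "\<And>t. t \<in> {0..r} \<Longrightarrow> ((\<lambda>s. - (Psi s ** A (y s) (u s))) has_integral (Psi t - mat 1)) {0..t}"
    by (auto simp: Psi_def)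
qed

lemma bounded_measurable_on_subinterval:
  assumes "t \<in> {0..r}"
  shows "bounded_measurable_on {0..t} (\<lambda>s. A (y s) (u s))"
        "bounded_measurable_on {0..t} (\<lambda>s. b (y s) (u s))"
    "bounded_measurable_on {0..t} Phi" "bounded_measurable_on {0..t} Psi"
  using assms measurable_A measurable_b
    bounded_measurable_on_continuous[OF continuous_on_Phi]
        bounded_measurable_on_continuous[OF continuous_on_Psi]
  by (auto elim!: bounded_measurable_on_subset)

lemma Psi_mult_Phi:
  assumes t: "t \<in> {0..r}"
  shows "Psi t ** Phi t = mat 1"
proof -
  note mb = bounded_measurable_on_subinterval[OF t]
  have "((\<lambda>s. - (Psi s ** A (y s) (u s)) ** Phi s + Psi s ** (A (y s) (u s) ** Phi s)) has_integral
          (Psi t ** Phi t - Psi 0 ** Phi 0)) {0..t}"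
  proof (rule has_integral_product_rule_bounded_measurable[OF bounded_bilinear_matrix_matrix_mult])
    show "((\<lambda>s. - (Psi s ** A (y s) (u s))) has_integral Psi \<tau> - Psi 0) {0..\<tau>}"
      "((\<lambda>s. A (y s) (u s) ** Phi s) has_integral Phi \<tau> - Phi 0) {0..\<tau>}" if "\<tau> \<in> {0..t}" for \<tau>
      using that t Psi_has_integral[of \<tau>] Phi_has_integral[of \<tau>] by (auto simp: Psi_0 Phi_0)
    show "bounded_measurable_on {0..t} (\<lambda>s. - (Psi s ** A (y s) (u s)))"
      using bounded_measurable_on_bilinear[OF bounded_bilinear_neg_matrix_mult_swap _ mb(1,4)] by simp
    show "bounded_measurable_on {0..t} (\<lambda>s. A (y s) (u s) ** Phi s)"
      using bounded_measurable_on_bilinear[OF bounded_bilinear_matrix_matrix_mult _ mb(1,3)] by simp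
  qed (use t in simp)
  moreover have "- (Psi s ** A (y s) (u s)) ** Phi s + Psi s ** (A (y s) (u s) ** Phi s) = 0" for s
    using bilinear_lneg[OF bilinear_matrix_matrix_mult, of "Psi s ** A (y s) (u s)" "Phi s"]
    by (simp add: matrix_mul_assoc)
  ultimately show ?thesis
    using has_integral_unique[OF has_integral_0] by (simp add: Psi_0 Phi_0)
qed

lemma matrix_inv_Phi: "t \<in> {0..r} \<Longrightarrow> matrix_inv (Phi t) = Psi t"
  by (rule matrix_inv_eqI[OF Psi_mult_Phi])

text \<open>Since $\Phi(\tau)\Phi(s)^{-1} = \Phi(\tau)\Psi(s)$, we get $\theta = \Phi\eta$
  (variation of constants).\<close>

definition eta :: "real \<Rightarrow> real^'n" where
  "eta \<tau> = integral {0..\<tau>} (\<lambda>s. Psi s *v b (y s) (u s))"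

lemma Psi_b_has_integral:
  assumes "\<tau> \<in> {0..r}"
  shows "((\<lambda>s. Psi s *v b (y s) (u s)) has_integral eta \<tau>) {0..\<tau>}"
proof -
  have "bounded_measurable_on {0..r} (\<lambda>s. Psi s *v b (y s) (u s))"
    using bounded_measurable_on_bilinear[OF bounded_bilinear_matrix_vector_mult _
        bounded_measurable_on_subinterval(4,2)[of r]] r_pos by simp
  then show ?thesis
    unfolding eta_def using assms
        by (intro integrable_integral integrable_on_if_bounded_measurable_on) auto
qed

lemma Phi_mult_Psi: "t \<in> {0..r} \<Longrightarrow> Phi t ** Psi t = mat 1"
  using Psi_mult_Phi matrix_left_right_inverse by blast

lemma theta_eq:
  assumes "\<tau> \<in> {0..r}"
  shows "theta \<tau> = Phi \<tau> *v eta \<tau>"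
proof -
  have "theta \<tau> = integral {0..\<tau>} (\<lambda>s. Phi \<tau> *v (Psi s *v b (y s) (u s)))"
    unfolding obs_theta_def
    by (rule integral_cong) (use assms matrix_inv_Phi in \<open>auto simp: matrix_vector_mul_assoc\<close>)
  also have "\<dots> = Phi \<tau> *v eta \<tau>"
    by (rule integral_unique)
      (use has_integral_linear[OF Psi_b_has_integral[OF assms]
          matrix_vector_mul_bounded_linear[of "Phi \<tau>"]]
        in \<open>simp add: o_def\<close>)
  finally show ?thesis .
qed

lemma theta_has_integral:
  assumes t: "t \<in> {0..r}"
  shows "((\<lambda>s. A (y s) (u s) *v theta s + b (y s) (u s)) has_integral theta t) {0..t}"
proof -
  note mb = bounded_measurable_on_subinterval[OF t]
  have "((\<lambda>s. (A (y s) (u s) ** Phi s) *v eta s + Phi s *v (Psi s *v b (y s) (u s))) has_integral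
          (Phi t *v eta t - Phi 0 *v eta 0)) {0..t}"
  proof (rule has_integral_product_rule_bounded_measurable[OF bounded_bilinear_matrix_vector_mult])
    show "((\<lambda>s. A (y s) (u s) ** Phi s) has_integral Phi \<tau> - Phi 0) {0..\<tau>}"
      "((\<lambda>s. Psi s *v b (y s) (u s)) has_integral eta \<tau> - eta 0) {0..\<tau>}" if "\<tau> \<in> {0..t}" for \<tau>
      using that t Phi_has_integral[of \<tau>] Psi_b_has_integral[of \<tau>] by (auto simp: Phi_0 eta_def)
    show "bounded_measurable_on {0..t} (\<lambda>s. A (y s) (u s) ** Phi s)"
      using bounded_measurable_on_bilinear[OF bounded_bilinear_matrix_matrix_mult _ mb(1,3)] by simp
    show "bounded_measurable_on {0..t} (\<lambda>s. Psi s *v b (y s) (u s))"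
      using bounded_measurable_on_bilinear[OF bounded_bilinear_matrix_vector_mult _ mb(4,2)] by simp
  qed (use t in simp)
  moreover have "(A (y s) (u s) ** Phi s) *v eta s + Phi s *v (Psi s *v b (y s) (u s))
                   = A (y s) (u s) *v theta s + b (y s) (u s)" if "s \<in> {0..t}" for s
    using that t theta_eq[of s] Phi_mult_Psi[of s] by (simp add: matrix_vector_mul_assoc)
  ultimately have "((\<lambda>s. A (y s) (u s) *v theta s + b (y s) (u s)) has_integral
                     (Phi t *v eta t - Phi 0 *v eta 0)) {0..t}"
    by (subst (asm) has_integral_cong) auto
  then show ?thesis using theta_eq[OF t] by (simp add: eta_def)
qed

lemma theta_0: "theta 0 = 0"
  by (simp add: obs_theta_def)

lemma x_variation_of_constants:
  assumes "t \<in> {0..r}"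
  shows "x t = Phi t *v x 0 + theta t"
proof -
  obtain K where K: "\<And>s. s \<in> {0..r} \<Longrightarrow> norm (A (y s) (u s)) \<le> K"
    using measurable_A bounded_measurable_on_norm_le by blast
  have "((\<lambda>s. A (y s) (u s) *v (Phi s *v x 0 + theta s) + b (y s) (u s)) has_integral
          (Phi \<tau> *v x 0 + theta \<tau> - (Phi 0 *v x 0 + theta 0))) {0..\<tau>}" if \<tau>: "\<tau> \<in> {0..r}" for \<tau>
  proof -
    have "((\<lambda>s. (A (y s) (u s) ** Phi s) *v x 0) has_integral (Phi \<tau> - mat 1) *v x 0) {0..\<tau>}"
      using has_integral_linear[OF Phi_has_integral[OF \<tau>]
          bounded_bilinear.bounded_linear_left[OF bounded_bilinear_matrix_vector_mult, of "x 0"]]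
      by (simp add: o_def)
    from has_integral_add[OF this theta_has_integral[OF \<tau>]] show ?thesis
      by (simp add: Phi_0 theta_0 algebra_simps matrix_vector_mul_assoc
          matrix_vector_mult_diff_rdistrib matrix_vector_right_distrib)
  qed
  from affine_integral_equation_unique[where w="\<lambda>t. Phi t *v x 0 + theta t", OF x_eq this _ K assms]
  show ?thesis by (simp add: Phi_0 theta_0)
qed

lemma continuous_on_C_Phi: "continuous_on {0..r} (\<lambda>s. C (y s) ** Phi s)"
  by (rule bounded_bilinear.continuous_on[OF bounded_bilinear_matrix_matrix_mult continuous_C
      continuous_on_Phi])

lemma C_Phi_has_integral:
  assumes "\<tau> \<in> {0..r}"
  shows "((\<lambda>s. C (y s) ** Phi s) has_integral transpose (q \<tau>)) {0..\<tau>}"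
proof -
  have "(\<lambda>s. C (y s) ** Phi s) integrable_on {0..\<tau>}"
    using bounded_measurable_on_continuous[OF continuous_on_C_Phi] assms
    by (intro integrable_on_if_bounded_measurable_on) auto
  then obtain I where I: "((\<lambda>s. C (y s) ** Phi s) has_integral I) {0..\<tau>}" by blast
  have "q \<tau> = transpose I"
    unfolding obs_q_def matrix_transpose_mul[symmetric]
    using has_integral_linear[OF I bounded_linear_transpose] by (simp add: o_def integral_unique)
  then show ?thesis using I by simp
qed

lemma continuous_on_q: "continuous_on {0..r} q"
proof -
  have "continuous_on {0..r} (\<lambda>s. transpose (C (y s) ** Phi s))"
    using linear_continuous_on_compose[OF continuous_on_C_Phi
        bounded_linear.linear[OF bounded_linear_transpose]]
    by simp
  then show ?thesis
    unfolding obs_q_def matrix_transpose_mul[symmetric]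
    by (intro indefinite_integral_continuous_1 integrable_on_if_bounded_measurable_on
        bounded_measurable_on_continuous) auto
qed

lemma obs_p_eq:
  assumes t: "\<tau> \<in> {0..r}"
  shows "obs_p A b C f r y u \<tau> = transpose (q \<tau>) *v x 0"
proof -
  have "continuous_on {0..r} theta"
    by (rule continuous_on_if_has_integral_increments) (use theta_has_integral theta_0 in simp)
  then have "continuous_on {0..r} (\<lambda>s. C (y s) *v x s)" "continuous_on {0..r} (\<lambda>s. C (y s) *v theta s)"
    using continuous_on_if_has_integral_increments[OF x_eq]
    by (auto intro: bounded_bilinear.continuous_on[OF bounded_bilinear_matrix_vector_mult continuous_C])
  then have "(\<lambda>s. C (y s) *v x s) integrable_on {0..\<tau>}" "(\<lambda>s. C (y s) *v theta s) integrable_on {0..\<tau>}"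
    using t by (auto intro!: integrable_on_if_bounded_measurable_on bounded_measurable_on_continuous)
  then obtain I1 I2 where I1: "((\<lambda>s. C (y s) *v x s) has_integral I1) {0..\<tau>}"
    and I2: "((\<lambda>s. C (y s) *v theta s) has_integral I2) {0..\<tau>}"
    by blast
  have "((\<lambda>s. f (y s) (u s)) has_integral (y \<tau> - y 0 - I1)) {0..\<tau>}"
    using has_integral_diff[OF y_eq[OF t] I1] by simp
  moreover have "((\<lambda>s. (C (y s) ** Phi s) *v x 0) has_integral (I1 - I2)) {0..\<tau>}"
  proof (rule has_integral_eq[OF _ has_integral_diff[OF I1 I2]])
    fix s assume "s \<in> {0..\<tau>}"
    then have "x s = Phi s *v x 0 + theta s" using t by (intro x_variation_of_constants) auto
    then show "C (y s) *v x s - C (y s) *v theta s = (C (y s) ** Phi s) *v x 0"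
      by (simp add: matrix_vector_mul_assoc[symmetric] matrix_vector_right_distrib)
  qed
  then have "I1 - I2 = transpose (q \<tau>) *v x 0"
    using has_integral_linear[OF C_Phi_has_integral[OF t]
        bounded_bilinear.bounded_linear_left[OF bounded_bilinear_matrix_vector_mult, of "x 0"]]
    by (simp add: o_def has_integral_unique)
  ultimately show ?thesis
    unfolding obs_p_def using integral_unique[OF I2] by (simp add: integral_unique)
qed

lemma Q_has_integral: "((\<lambda>\<tau>. q \<tau> ** transpose (q \<tau>)) has_integral Q) {0..r}"
proof -
  have "continuous_on {0..r} (\<lambda>\<tau>. q \<tau> ** transpose (q \<tau>))"
    using continuous_on_q
    by (intro bounded_bilinear.continuous_on[OF bounded_bilinear_matrix_matrix_mult]
        linear_continuous_on_compose[OF _ bounded_linear.linear[OF bounded_linear_transpose]])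
  then show ?thesis
    unfolding obs_Q_def
    by (intro integrable_integral integrable_on_if_bounded_measurable_on
        bounded_measurable_on_continuous) auto
qed

lemma obs_P_eq_state:
  assumes "invertible Q"
  shows "obs_P A b C f r y u = x r"
proof -
  have "integral {0..r} (\<lambda>\<tau>. q \<tau> *v obs_p A b C f r y u \<tau>) = integral {0..r}
      (\<lambda>\<tau>. (q \<tau> ** transpose (q \<tau>)) *v x 0)"
    by (rule integral_cong) (simp only: obs_p_eq matrix_vector_mul_assoc)
  also have "\<dots> = Q *v x 0"
    using has_integral_linear[OF Q_has_integral
        bounded_bilinear.bounded_linear_left[OF bounded_bilinear_matrix_vector_mult, of "x 0"]]
    by (simp add: o_def integral_unique)
  moreover obtain Q' where "Q' ** Q = mat 1"
    using assms invertible_left_inverse by blast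
  ultimately have "matrix_inv Q *v integral {0..r} (\<lambda>\<tau>. q \<tau> *v obs_p A b C f r y u \<tau>) = x 0"
    by (simp add: matrix_inv_eqI matrix_vector_mul_assoc)
  then show ?thesis
    unfolding obs_P_def using x_variation_of_constants[of r] r_pos by simp
qed

text \<open>The Gramian $Q$ is positive semidefinite: $v^T Q v = \int_0^r |q(\tau)^T v|^2\,d\tau$, and the
  integrand is continuous.\<close>

lemma transpose_q_mult_eq_0:
  assumes Qv: "Q *v v = 0" and "\<tau> \<in> {0..r}"
  shows "transpose (q \<tau>) *v v = 0"
proof -
  define \<phi> where "\<phi> \<tau> = (transpose (q \<tau>) *v v) \<bullet> (transpose (q \<tau>) *v v)" for \<tau>
  have "((\<lambda>\<tau>. v \<bullet> ((q \<tau> ** transpose (q \<tau>)) *v v)) has_integral (v \<bullet> (Q *v v))) {0..r}"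
    using has_integral_linear[OF has_integral_linear[OF Q_has_integral
          bounded_bilinear.bounded_linear_left[OF bounded_bilinear_matrix_vector_mult, of v]]
        bounded_linear_inner_right[of v]]
    by (simp add: o_def)
  moreover have "v \<bullet> ((q \<tau> ** transpose (q \<tau>)) *v v) = \<phi> \<tau>" for \<tau>
    unfolding \<phi>_def
    by (simp only: matrix_vector_mul_assoc[symmetric] dot_lmul_matrix[symmetric] transpose_matrix_vector)
  ultimately have I: "(\<phi> has_integral 0) (cbox 0 r)" using Qv by (simp add: cbox_interval)
  moreover have "continuous_on (cbox 0 r) \<phi>"
    unfolding \<phi>_def cbox_interval
    using continuous_on_q
    by (intro continuous_intros bounded_bilinear.continuous_on[OF bounded_bilinear_matrix_vector_mult]
        linear_continuous_on_compose[OF _ bounded_linear.linear[OF bounded_linear_transpose]])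
  then have "\<phi> \<tau> = 0"
    by (rule has_integral_0_cbox_imp_0[OF _ _ I]) (use assms(2) r_pos in \<open>auto simp: \<phi>_def\<close>)
  then show ?thesis unfolding \<phi>_def by simp
qed

text \<open>A nonzero $v$ in the kernel of $Q$ yields a second state trajectory $x + c\Phi v$ producing
  the same output $y$.\<close>

lemma perturbed_state_has_integral:
  assumes Qv: "Q *v v = 0" and t: "t \<in> {0..r}"
  shows "((\<lambda>s. A (y s) (u s) *v (x s + c *\<^sub>R (Phi s *v v)) + b (y s) (u s)) has_integral
            (x t + c *\<^sub>R (Phi t *v v) - (x 0 + c *\<^sub>R (Phi 0 *v v)))) {0..t}"
    and "((\<lambda>s. f (y s) (u s) + C (y s) *v (x s + c *\<^sub>R (Phi s *v v))) has_integral (y t - y 0)) {0..t}"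
proof -
  have bl: "bounded_linear (\<lambda>X::real^'n^'l. c *\<^sub>R (X *v v))"
    by (rule bounded_linear_compose[OF bounded_linear_scaleR_right])
      (use bounded_bilinear.bounded_linear_left[OF bounded_bilinear_matrix_vector_mult, of v] in simp)
  have "((\<lambda>s. (A (y s) (u s) *v x s + b (y s) (u s)) + c *\<^sub>R ((A (y s) (u s) ** Phi s) *v v)) has_integral
          ((x t - x 0) + c *\<^sub>R ((Phi t - mat 1) *v v))) {0..t}"
    using has_integral_add[OF x_eq[OF t] has_integral_linear[OF Phi_has_integral[OF t] bl]]
        by (simp add: o_def)
  then show "((\<lambda>s. A (y s) (u s) *v (x s + c *\<^sub>R (Phi s *v v)) + b (y s) (u s)) has_integral
               (x t + c *\<^sub>R (Phi t *v v) - (x 0 + c *\<^sub>R (Phi 0 *v v)))) {0..t}"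
    by (simp add: Phi_0 algebra_simps matrix_vector_mul_assoc scaleR_matrix_vector_assoc[symmetric]
        matrix_vector_mult_scaleR)
  have "((\<lambda>s. (f (y s) (u s) + C (y s) *v x s) + c *\<^sub>R ((C (y s) ** Phi s) *v v)) has_integral
          ((y t - y 0) + c *\<^sub>R (transpose (q t) *v v))) {0..t}"
    using has_integral_add[OF y_eq[OF t] has_integral_linear[OF C_Phi_has_integral[OF t] bl]]
    by (simp add: o_def)
  then show
      "((\<lambda>s. f (y s) (u s) + C (y s) *v (x s + c *\<^sub>R (Phi s *v v))) has_integral (y t - y 0)) {0..t}"
    using transpose_q_mult_eq_0[OF Qv t]
    by (simp add: algebra_simps matrix_vector_mul_assoc scaleR_matrix_vector_assoc[symmetric]
        matrix_vector_mult_scaleR)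
qed

lemma perturbed_state_lin_sol:
  assumes "Q *v v = 0"
  shows "lin_sol A b y u 0 r (x 0 + c *\<^sub>R v) (\<lambda>s. x s + c *\<^sub>R (Phi s *v v))"
proof -
  define x' where "x' s = x s + c *\<^sub>R (Phi s *v v)" for s
  have "((\<lambda>s. A (y s) (u s) *v x' s + b (y s) (u s)) has_integral (x' t - x' 0)) {0..t}"
    if "t \<in> {0..r}" for t
    using perturbed_state_has_integral(1)[OF assms that] by (simp add: x'_def)
  moreover note continuous_on_if_has_integral_increments[OF this]
  ultimately have "lin_sol A b y u 0 r (x' 0) x'" unfolding lin_sol_def by simp
  then show ?thesis by (simp add: x'_def[abs_def] Phi_0)
qed

end

section \<open>Solutions of the system\<close>

lemma sys_field_has_integral_iff:
  fixes S :: "real set"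
  shows "((\<lambda>s. sys_field A b C f (x s, y s) (u s)) has_integral (I, J)) S \<longleftrightarrow>
     ((\<lambda>s. A (y s) (u s) *v x s + b (y s) (u s)) has_integral I) S \<and>
     ((\<lambda>s. f (y s) (u s) + C (y s) *v x s) has_integral J) S"
proof
  assume "((\<lambda>s. sys_field A b C f (x s, y s) (u s)) has_integral (I, J)) S"
  from has_integral_linear[OF this bounded_linear_fst] has_integral_linear[OF this bounded_linear_snd]
  show "((\<lambda>s. A (y s) (u s) *v x s + b (y s) (u s)) has_integral I) S \<and>
        ((\<lambda>s. f (y s) (u s) + C (y s) *v x s) has_integral J) S"
    by (simp add: o_def sys_field_def)
next
  assume "((\<lambda>s. A (y s) (u s) *v x s + b (y s) (u s)) has_integral I) S \<and>
          ((\<lambda>s. f (y s) (u s) + C (y s) *v x s) has_integral J) S"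
  then show "((\<lambda>s. sys_field A b C f (x s, y s) (u s)) has_integral (I, J)) S"
    unfolding sys_field_def by (auto intro: has_integral_Pair)
qed

lemma sys_sol_has_integral_interval:
  assumes w: "sys_sol A b C f Ob p u w" and "0 \<le> a" "a \<le> t"
  shows "((\<lambda>s. A (snd (w s)) (u s) *v fst (w s) + b (snd (w s)) (u s)) has_integral
            (fst (w t) - fst (w a))) {a..t}"
    and "((\<lambda>s. f (snd (w s)) (u s) + C (snd (w s)) *v fst (w s)) has_integral
            (snd (w t) - snd (w a))) {a..t}"
proof -
  have "((\<lambda>s. sys_field A b C f (w s) (u s)) has_integral ((w t - p) - (w a - p))) {a..t}"
    by (rule has_integral_interval_diff) (use w assms(2,3) in \<open>auto simp: sys_sol_def\<close>)
  moreover have "w t - w a = (fst (w t) - fst (w a), snd (w t) - snd (w a))" by (simp add: prod_eq_iff)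
  ultimately have "((\<lambda>s. sys_field A b C f (fst (w s), snd (w s)) (u s)) has_integral
               (fst (w t) - fst (w a), snd (w t) - snd (w a))) {a..t}"
    by simp
  then show "((\<lambda>s. A (snd (w s)) (u s) *v fst (w s) + b (snd (w s)) (u s)) has_integral
                 (fst (w t) - fst (w a))) {a..t}"
    and "((\<lambda>s. f (snd (w s)) (u s) + C (snd (w s)) *v fst (w s)) has_integral
                 (snd (w t) - snd (w a))) {a..t}"
    unfolding sys_field_has_integral_iff by blast+
qed

lemma sys_sol_output:
  assumes "sys_sol A b C f (D \<times> \<Omega>) p u w" "a \<ge> 0"
  shows "continuous_on {a..t} (\<lambda>s. snd (w s))" "(\<lambda>s. snd (w s)) ` {a..t} \<subseteq> \<Omega>"
proof -
  have "continuous_on {0..} w" "\<And>s. s \<ge> 0 \<Longrightarrow> w s \<in> D \<times> \<Omega>" using assms(1) unfolding sys_sol_def by auto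
  then show "continuous_on {a..t} (\<lambda>s. snd (w s))" "(\<lambda>s. snd (w s)) ` {a..t} \<subseteq> \<Omega>"
    using assms(2) by (auto intro!: continuous_intros elim!: continuous_on_subset simp: mem_Times_iff)
qed

lemma sys_sol_shift:
  assumes "sys_sol A b C f Ob p u w" "\<tau> \<ge> 0"
  shows "sys_sol A b C f Ob (w \<tau>) (\<lambda>s. u (\<tau> + s)) (\<lambda>s. w (\<tau> + s))"
proof -
  have w: "continuous_on {0..} w" "\<And>t. t \<ge> 0 \<Longrightarrow> w t \<in> Ob"
    "\<And>t. t \<ge> 0 \<Longrightarrow> ((\<lambda>s. sys_field A b C f (w s) (u s)) has_integral (w t - p)) {0..t}"
    using assms(1) unfolding sys_sol_def by blast+
  have "continuous_on {0..} (\<lambda>s. w (\<tau> + s))"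
    by (rule continuous_on_compose2[OF w(1)]) (use assms(2) in \<open>auto intro: continuous_intros\<close>)
  moreover have "((\<lambda>s. sys_field A b C f (w (\<tau> + s)) (u (\<tau> + s))) has_integral (w (\<tau> + t) - w \<tau>)) {0..t}"
    if "t \<ge> 0" for t
    using has_integral_interval_diff[OF w(3)[of "\<tau> + t"] w(3)[of \<tau>]] assms(2) that
      has_integral_shift_origin[of "\<lambda>s. sys_field A b C f (w s) (u s)" \<tau>] by simp
  ultimately show ?thesis using w(2) assms(2) unfolding sys_sol_def by auto
qed

lemma sys_sol_concat:
  assumes "r > 0" and w1: "\<And>t. t \<in> {0..r} \<Longrightarrow>
              ((\<lambda>s. sys_field A b C f (w1 s) (u s)) has_integral (w1 t - w1 0)) {0..t}"
    and w1_Ob: "\<And>t. t \<in> {0..r} \<Longrightarrow> w1 t \<in> Ob"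
    and w2: "sys_sol A b C f Ob (w1 r) (\<lambda>s. u (r + s)) w2"
  shows "sys_sol A b C f Ob (w1 0) u (\<lambda>t. if t \<le> r then w1 t else w2 (t - r))"
proof -
  define w where "w t = (if t \<le> r then w1 t else w2 (t - r))" for t
  have w2_0: "w2 0 = w1 r" and w2_cont: "continuous_on {0..} w2" and w2_Ob: "\<And>t. t \<ge> 0 \<Longrightarrow> w2 t \<in> Ob"
    and w2_int: "\<And>t. t \<ge> 0 \<Longrightarrow>
       ((\<lambda>s. sys_field A b C f (w2 s) (u (r + s))) has_integral (w2 t - w1 r)) {0..t}"
    using w2 unfolding sys_sol_def by blast+
  have "continuous_on {0..} w"
    unfolding w_def[abs_def]
  proof (rule continuous_on_cases_le)
    have "{t \<in> {0..}. t \<le> r} = {0..r}" by auto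
    then show "continuous_on {t \<in> {0..}. t \<le> r} w1"
      using continuous_on_if_has_integral_increments[OF w1] by simp
    show "continuous_on {t \<in> {0..}. r \<le> t} (\<lambda>t. w2 (t - r))"
      by (rule continuous_on_compose2[OF w2_cont]) (use \<open>r > 0\<close> in \<open>auto intro: continuous_intros\<close>)
  qed (use w2_0 in \<open>auto intro: continuous_intros\<close>)
  moreover have "((\<lambda>s. sys_field A b C f (w s) (u s)) has_integral (w t - w1 0)) {0..t}" if "t \<ge> 0" for t
  proof (cases "t \<le> r")
    case True
    have "((\<lambda>s. sys_field A b C f (w s) (u s)) has_integral (w1 t - w1 0)) {0..t}"
      by (rule has_integral_eq[OF _ w1[of t]]) (use True that in \<open>auto simp: w_def\<close>)
    then show ?thesis using True by (simp add: w_def)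
  next
    case False
    have "((\<lambda>s. sys_field A b C f (w2 (s - r)) (u s)) has_integral (w2 (t - r) - w1 r)) {r..t}"
      using w2_int[of "t - r"] False
        has_integral_shift_origin[of "\<lambda>s. sys_field A b C f (w2 (s - r)) (u s)" r] by simp
    then have "((\<lambda>s. sys_field A b C f (w s) (u s)) has_integral (w2 (t - r) - w1 r)) {r..t}"
      by (rule has_integral_eq[rotated]) (auto simp: w_def w2_0)
    moreover have "((\<lambda>s. sys_field A b C f (w s) (u s)) has_integral (w1 r - w1 0)) {0..r}"
      by (rule has_integral_eq[OF _ w1[of r]]) (use \<open>r > 0\<close> in \<open>auto simp: w_def\<close>)
    ultimately show ?thesis
      using has_integral_combine[of 0 r t] \<open>r > 0\<close> False by (fastforce simp: w_def)
  qed
  moreover have "w t \<in> Ob" if "t \<ge> 0" for t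
    using w1_Ob w2_Ob that by (simp add: w_def)
  ultimately show ?thesis
    unfolding sys_sol_def w_def[symmetric] using \<open>r > 0\<close> by (simp add: w_def)
qed

lemma observation_window_of_sys_sol:
  assumes A: "continuous_on (\<Omega> \<times> U) (\<lambda>(y, v). A y v)" and b: "continuous_on (\<Omega> \<times> U) (\<lambda>(y, v). b y v)"
    and C: "continuous_on \<Omega> C" and "closed U" and "r > 0" and u: "Linf_loc U u"
    and w: "sys_sol A b C f (D \<times> \<Omega>) p u w"
  shows "observation_window A b C f r (\<lambda>s. snd (w s)) u (\<lambda>s. fst (w s))"
proof -
  note y = sys_sol_output[OF w order_refl] and u_mb = Linf_loc_bounded_measurable_on[OF u order_refl]
  show ?thesis
    unfolding observation_window_def
    using \<open>r > 0\<close> bounded_measurable_on_compose_input[OF A \<open>closed U\<close> y u_mb]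
      bounded_measurable_on_compose_input[OF b \<open>closed U\<close> y u_mb] continuous_on_compose2[OF C y]
      sys_sol_has_integral_interval[OF w order_refl]
    by simp
qed

text \<open>The state perturbed along a kernel vector of $Q$ stays in $D$ on $[0,r]$ by the invariance
  hypothesis and is continued by well-posedness.\<close>

lemma output_equivalent_solution_if_obs_Q_singular:
  fixes D :: "(real^'n) set" and \<Omega> :: "(real^'k) set" and U :: "(real^'m) set"
    and A :: "real^'k \<Rightarrow> real^'m \<Rightarrow> real^'n^'n" and b :: "real^'k \<Rightarrow> real^'m \<Rightarrow> real^'n"
    and C :: "real^'k \<Rightarrow> real^'n^'k" and f :: "real^'k \<Rightarrow> real^'m \<Rightarrow> real^'k"
  assumes "open D"
    and existence: "\<forall>p\<in>D \<times> \<Omega>. \<forall>v. Linf_loc U v \<longrightarrow> (\<exists>w'. sys_sol A b C f (D \<times> \<Omega>) p v w')"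
    and inv: "\<forall>\<xi>\<in>D. \<forall>y v. continuous_on {0..r} y \<and> y ` {0..r} \<subseteq> \<Omega> \<and> Linf r U v \<longrightarrow>
          (\<forall>z'. lin_sol A b y v 0 r \<xi> z' \<longrightarrow> (\<forall>t\<in>{0..r}. z' t \<in> D))"
    and window: "observation_window A b C f r (\<lambda>s. snd (w s)) u (\<lambda>s. fst (w s))"
    and u: "Linf_loc U u" and w: "sys_sol A b C f (D \<times> \<Omega>) p u w"
    and Qv: "obs_Q A C r (\<lambda>s. snd (w s)) u *v v = 0" and "v \<noteq> 0"
  obtains q w' where "q \<in> D \<times> \<Omega>" "q \<noteq> p" "sys_sol A b C f (D \<times> \<Omega>) q u w'"
    "\<forall>t\<in>{0..r}. snd (w' t) = snd (w t)"
proof -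
  interpret observation_window A b C f r "\<lambda>s. snd (w s)" u "\<lambda>s. fst (w s)" by (rule window)
  have w_Ob: "\<And>t. t \<ge> 0 \<Longrightarrow> w t \<in> D \<times> \<Omega>" and "w 0 = p" using w unfolding sys_sol_def by auto
  then obtain \<delta> where "\<delta> > 0" "ball (fst p) \<delta> \<subseteq> D"
    using \<open>open D\<close> openE[of D "fst p"] by (metis mem_Times_iff order_refl)
  define \<epsilon> where "\<epsilon> = \<delta> / (2 * norm v)"
  have "\<epsilon> > 0" using \<open>\<delta> > 0\<close> \<open>v \<noteq> 0\<close> by (simp add: \<epsilon>_def)
  define x' where "x' s = fst (w s) + \<epsilon> *\<^sub>R (Phi s *v v)" for s
  have x'_0: "x' 0 = fst p + \<epsilon> *\<^sub>R v" using \<open>w 0 = p\<close> by (simp add: x'_def Phi_0)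
  have "dist (fst p) (x' 0) < \<delta>"
    using \<open>\<delta> > 0\<close> \<open>\<epsilon> > 0\<close> \<open>v \<noteq> 0\<close> by (simp add: x'_0 dist_norm \<epsilon>_def)
  then have "x' 0 \<in> D" using \<open>ball (fst p) \<delta> \<subseteq> D\<close> by auto
  moreover have "lin_sol A b (\<lambda>s. snd (w s)) u 0 r (x' 0) x'"
    using perturbed_state_lin_sol[OF Qv, of \<epsilon>] \<open>w 0 = p\<close> by (simp add: x'_def[abs_def] Phi_0)
  ultimately have x'_D: "\<And>t. t \<in> {0..r} \<Longrightarrow> x' t \<in> D"
    using inv sys_sol_output[OF w order_refl] Linf_loc_imp_Linf[OF u] by blast
  define w1 where "w1 t = (x' t, snd (w t))" for t
  have w1_Ob: "\<And>t. t \<in> {0..r} \<Longrightarrow> w1 t \<in> D \<times> \<Omega>"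
    using x'_D w_Ob by (auto simp: w1_def mem_Times_iff)
  obtain w3 where w3: "sys_sol A b C f (D \<times> \<Omega>) (w1 r) (\<lambda>s. u (r + s)) w3"
    using existence w1_Ob[of r] Linf_loc_shift[OF u, of r] r_pos by fastforce
  have "((\<lambda>s. sys_field A b C f (w1 s) (u s)) has_integral (w1 t - w1 0)) {0..t}" if "t \<in> {0..r}" for t
    using perturbed_state_has_integral[OF Qv that, of \<epsilon>]
        sys_field_has_integral_iff[of A b C f x' "\<lambda>s. snd (w s)" u]
    by (simp add: w1_def x'_def)
  from sys_sol_concat[OF r_pos this w1_Ob w3]
  have "sys_sol A b C f (D \<times> \<Omega>) (w1 0) u (\<lambda>t. if t \<le> r then w1 t else w3 (t - r))" .
  moreover have "w1 0 \<noteq> p"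
    using \<open>\<epsilon> > 0\<close> \<open>v \<noteq> 0\<close> by (auto simp: w1_def x'_0 prod_eq_iff)
  ultimately show thesis
    using that w1_Ob[of 0] r_pos by (auto simp: w1_def)
qed

lemma obs_Q_invertible:
  fixes D :: "(real^'n) set" and \<Omega> :: "(real^'k) set" and U :: "(real^'m) set"
    and A :: "real^'k \<Rightarrow> real^'m \<Rightarrow> real^'n^'n" and b :: "real^'k \<Rightarrow> real^'m \<Rightarrow> real^'n"
    and C :: "real^'k \<Rightarrow> real^'n^'k" and f :: "real^'k \<Rightarrow> real^'m \<Rightarrow> real^'k"
  assumes "open D"
    and existence: "\<forall>p\<in>D \<times> \<Omega>. \<forall>v. Linf_loc U v \<longrightarrow> (\<exists>w'. sys_sol A b C f (D \<times> \<Omega>) p v w')"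
    and obs: "strongly_observable A b C f (D \<times> \<Omega>) U r"
    and inv: "\<forall>\<xi>\<in>D. \<forall>y v. continuous_on {0..r} y \<and> y ` {0..r} \<subseteq> \<Omega> \<and> Linf r U v \<longrightarrow>
          (\<forall>z'. lin_sol A b y v 0 r \<xi> z' \<longrightarrow> (\<forall>t\<in>{0..r}. z' t \<in> D))"
    and window: "observation_window A b C f r (\<lambda>s. snd (w s)) u (\<lambda>s. fst (w s))"
    and u: "Linf_loc U u" and w: "sys_sol A b C f (D \<times> \<Omega>) p u w"
  shows "invertible (obs_Q A C r (\<lambda>s. snd (w s)) u)"
proof (rule ccontr)
  assume "\<not> ?thesis"
  then obtain v where "obs_Q A C r (\<lambda>s. snd (w s)) u *v v = 0" "v \<noteq> 0"
    unfolding invertible_left_inverse matrix_left_invertible_ker by blast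
  then obtain q w' where "q \<in> D \<times> \<Omega>" "q \<noteq> p" "sys_sol A b C f (D \<times> \<Omega>) q u w'"
    "\<forall>t\<in>{0..r}. snd (w' t) = snd (w t)"
    using output_equivalent_solution_if_obs_Q_singular[OF assms(1,2,4-7)] by blast
  moreover have "p \<in> D \<times> \<Omega>" using w unfolding sys_sol_def by force
  then have "strongly_distinguishes A b C f (D \<times> \<Omega>) U r u p"
    using obs Linf_loc_imp_Linf[OF u] unfolding strongly_observable_def by blast
  ultimately show False
    using u w unfolding strongly_distinguishes_def by fastforce
qed

lemma obs_P_eq_state_of_sys_sol:
  fixes D :: "(real^'n) set" and \<Omega> :: "(real^'k) set" and U :: "(real^'m) set"
    and A :: "real^'k \<Rightarrow> real^'m \<Rightarrow> real^'n^'n" and b :: "real^'k \<Rightarrow> real^'m \<Rightarrow> real^'n"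
    and C :: "real^'k \<Rightarrow> real^'n^'k" and f :: "real^'k \<Rightarrow> real^'m \<Rightarrow> real^'k"
  assumes "open D" and "closed U"
    and A: "continuous_on (\<Omega> \<times> U) (\<lambda>(y, v). A y v)" and b: "continuous_on (\<Omega> \<times> U) (\<lambda>(y, v). b y v)"
    and C: "continuous_on \<Omega> C"
    and existence: "\<forall>p\<in>D \<times> \<Omega>. \<forall>v. Linf_loc U v \<longrightarrow> (\<exists>w'. sys_sol A b C f (D \<times> \<Omega>) p v w')"
    and "r > 0" and obs: "strongly_observable A b C f (D \<times> \<Omega>) U r"
    and inv: "\<forall>\<xi>\<in>D. \<forall>y v. continuous_on {0..r} y \<and> y ` {0..r} \<subseteq> \<Omega> \<and> Linf r U v \<longrightarrow>
          (\<forall>z'. lin_sol A b y v 0 r \<xi> z' \<longrightarrow> (\<forall>t\<in>{0..r}. z' t \<in> D))"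
    and u: "Linf_loc U u" and w: "sys_sol A b C f (D \<times> \<Omega>) p u w" and "\<tau> \<ge> 0"
  shows "obs_P A b C f r (\<lambda>\<sigma>. snd (w (\<tau> + \<sigma>))) (\<lambda>\<sigma>. u (\<tau> + \<sigma>)) = fst (w (\<tau> + r))"
proof -
  note u' = Linf_loc_shift[OF u \<open>\<tau> \<ge> 0\<close>] and w' = sys_sol_shift[OF w \<open>\<tau> \<ge> 0\<close>]
  note window = observation_window_of_sys_sol[OF A b C \<open>closed U\<close> \<open>r > 0\<close> u' w']
  show ?thesis
    using observation_window.obs_P_eq_state[OF window
        obs_Q_invertible[OF \<open>open D\<close> existence obs inv window u' w']]
    by simp
qed

section \<open>The observer\<close>

lemma observer_eq_state_at_nodes:
  assumes "observer_sol A b C f r (\<lambda>t. snd (w t)) u z0 z"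
    and P: "\<And>\<tau>. \<tau> \<ge> 0 \<Longrightarrow> obs_P A b C f r (\<lambda>\<sigma>. snd (w (\<tau> + \<sigma>))) (\<lambda>\<sigma>. u (\<tau> + \<sigma>)) = fst (w (\<tau> + r))"
    and "r > 0"
  shows "z (real (Suc i) * r) = fst (w (real (Suc i) * r))"
  using assms(1) P[of "real i * r"] \<open>r > 0\<close> unfolding observer_sol_def by (simp add: algebra_simps)

text \<open>Between two sampling instants, observer and state solve the same linear equation
  $\dot\xi = A(y,u)\xi + b(y,u)$, so agreement at the left node propagates.\<close>

lemma observer_eq_state_between_nodes:
  assumes A: "continuous_on (\<Omega> \<times> U) (\<lambda>(y, v). A y v)" and "closed U"
    and u: "Linf_loc U u" and w: "sys_sol A b C f (D \<times> \<Omega>) p u w"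
    and z: "observer_sol A b C f r (\<lambda>t. snd (w t)) u z0 z" and "r > 0"
    and node: "z (real i * r) = fst (w (real i * r))"
    and t: "real i * r \<le> t" "t < real (Suc i) * r"
  shows "z t = fst (w t)"
proof -
  define a where "a = real i * r"
  have "a \<ge> 0" using \<open>r > 0\<close> by (simp add: a_def)
  note y = sys_sol_output[OF w \<open>a \<ge> 0\<close>, of t]
  obtain K where K: "\<And>s. s \<in> {a..t} \<Longrightarrow> norm (A (snd (w s)) (u s)) \<le> K"
    using bounded_measurable_on_compose_input[OF A \<open>closed U\<close> y
        Linf_loc_bounded_measurable_on[OF u \<open>a \<ge> 0\<close>]]
      bounded_measurable_on_norm_le by blast
  have "((\<lambda>s. A (snd (w s)) (u s) *v z s + b (snd (w s)) (u s)) has_integral (z t' - z a)) {a..t'}"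
    if "t' \<in> {a..t}" for t'
  proof -
    have "\<forall>t'. a \<le> t' \<and> t' < real (Suc i) * r \<longrightarrow>
            ((\<lambda>s. A (snd (w s)) (u s) *v z s + b (snd (w s)) (u s)) has_integral (z t' - z a)) {a..t'}"
      using z unfolding observer_sol_def a_def by blast
    then show ?thesis using that t by auto
  qed
  then show ?thesis
    by (rule affine_integral_equation_unique[where b=t, OF _
        sys_sol_has_integral_interval(1)[OF w \<open>a \<ge> 0\<close>] _ K])
      (use node t in \<open>simp_all add: a_def\<close>)
qed

theorem corollary2p11:
  fixes D :: "(real^'n) set" and \<Omega> :: "(real^'k) set" and U :: "(real^'m) set"
    and A :: "real^'k \<Rightarrow> real^'m \<Rightarrow> real^'n^'n" and b :: "real^'k \<Rightarrow> real^'m \<Rightarrow> real^'n"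
    and C :: "real^'k \<Rightarrow> real^'n^'k" and f :: "real^'k \<Rightarrow> real^'m \<Rightarrow> real^'k"
    and r :: real and x0 z0 :: "real^'n" and y0 :: "real^'k"
    and u :: "real \<Rightarrow> real^'m" and w :: "real \<Rightarrow> (real^'n) \<times> (real^'k)"
    and z :: "real \<Rightarrow> real^'n"
  assumes "open D" and "open \<Omega>" and "U \<noteq> {}" and "closed U"
    and "loc_lipschitz (\<Omega> \<times> U) (\<lambda>(y, v). A y v)"
    and "loc_lipschitz (\<Omega> \<times> U) (\<lambda>(y, v). b y v)"
    and "\<forall>i j. loc_lipschitz \<Omega> (\<lambda>y. C y $ i $ j)"
    and "loc_lipschitz (\<Omega> \<times> U) (\<lambda>(y, v). f y v)"
    and wellposed: "\<forall>p\<in>D \<times> \<Omega>. \<forall>v. Linf_loc U v \<longrightarrow>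
          (\<exists>w'. sys_sol A b C f (D \<times> \<Omega>) p v w') \<and>
          (\<forall>w1 w2. sys_sol A b C f (D \<times> \<Omega>) p v w1 \<and> sys_sol A b C f (D \<times> \<Omega>) p v w2
                    \<longrightarrow> (\<forall>t\<ge>0. w1 t = w2 t))"
    and "r > 0"
    and obs: "strongly_observable A b C f (D \<times> \<Omega>) U r"
    and inv: "\<forall>\<xi>\<in>D. \<forall>y v. continuous_on {0..r} y \<and> y ` {0..r} \<subseteq> \<Omega> \<and> Linf r U v \<longrightarrow>
          (\<forall>z'. lin_sol A b y v 0 r \<xi> z' \<longrightarrow> (\<forall>t\<in>{0..r}. z' t \<in> D))"
    and "x0 \<in> D" and "y0 \<in> \<Omega>" and "z0 \<in> D"
    and "Linf_loc U u"
    and "sys_sol A b C f (D \<times> \<Omega>) (x0, y0) u w"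
    and "observer_sol A b C f r (\<lambda>t. snd (w t)) u z0 z"
    and "\<forall>t\<ge>0. z t \<in> D"
  shows "\<forall>t\<ge>r. z t = fst (w t)"
proof (intro allI impI)
  fix t assume "t \<ge> r"
  note u = \<open>Linf_loc U u\<close> and w = \<open>sys_sol A b C f (D \<times> \<Omega>) (x0, y0) u w\<close>
    and z = \<open>observer_sol A b C f r (\<lambda>t. snd (w t)) u z0 z\<close>
  have A: "continuous_on (\<Omega> \<times> U) (\<lambda>(y, v). A y v)" and b: "continuous_on (\<Omega> \<times> U) (\<lambda>(y, v). b y v)"
    and C: "continuous_on \<Omega> C"
    using assms(5-7)
        by (simp_all add: continuous_on_if_loc_lipschitz continuous_on_if_entries_loc_lipschitz)
  have existence: "\<forall>p\<in>D \<times> \<Omega>. \<forall>v. Linf_loc U v \<longrightarrow> (\<exists>w'. sys_sol A b C f (D \<times> \<Omega>) p v w')"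
    using wellposed by blast
  have P: "\<And>\<tau>. \<tau> \<ge> 0 \<Longrightarrow> obs_P A b C f r (\<lambda>\<sigma>. snd (w (\<tau> + \<sigma>))) (\<lambda>\<sigma>. u (\<tau> + \<sigma>)) = fst (w (\<tau> + r))"
    by (rule obs_P_eq_state_of_sys_sol[OF \<open>open D\<close> \<open>closed U\<close> A b C existence \<open>r > 0\<close> obs inv u w])
  define i where "i = nat \<lfloor>t / r\<rfloor>"
  have "1 \<le> t / r" using \<open>t \<ge> r\<close> \<open>r > 0\<close> by simp
  then have "i \<ge> 1" "real i \<le> t / r" "t / r < real i + 1" unfolding i_def by linarith+
  then have "real i * r \<le> t" "t < real (Suc i) * r" using \<open>r > 0\<close> by (simp_all add: field_simps)
  moreover obtain j where "i = Suc j" using \<open>i \<ge> 1\<close> by (cases i) auto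
  ultimately show "z t = fst (w t)"
    using observer_eq_state_between_nodes[OF A \<open>closed U\<close> u w z \<open>r > 0\<close>]
      observer_eq_state_at_nodes[OF z P \<open>r > 0\<close>] by blast
qed

end
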